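(* For all rigid analytically trivial dual $t$-motives $H_0,H_1$, the natural map $\mathrm{Hom}_{\bar k[t,\sigma]}(H_0,H_1)\to\mathrm{Hom}_{\mathbb F_q[t]}(H_0^{\mathrm{Betti}},H_1^{\mathrm{Betti}})$ is injective and its cokernel has no $\mathbb F_q[t]$-torsion.
   Context: $\bar k$ is the algebraic closure of $k=\mathbb F_q(T)$ in $\mathbb C_\infty$ (completion of an algebraic closure of $\mathbb F_q((1/T))$, $|T|_\infty=q$). $\mathbb C_\infty\{t\}$ is the ring of power series over $\mathbb C_\infty$ converging on $|t|_\infty\le1$; for $g=\sum a_it^i$, $g^{(-1)}=\sum a_i^{1/q}t^i$. $\bar k[t,\sigma]$ is generated over $\bar k$ by a central variable $t$ and $\sigma$ with $\sigma x=x^{q^{-1}}\sigma$. A dual $t$-motive is a left $\bar k[t,\sigma]$-module free of finite rank over $\bar k[t]$ and over $\bar k[\sigma]$ with $(t-T)^nH\subset\sigma H$ for $n\gg0$. For a dual $t$-motive $H$, $\tilde H=\mathbb C_\infty\{t\}\otimes_{\bar k[t]}H$ with $\sigma(g\otimes h)=g^{(-1)}\otimes\sigma h$, and $H^{\mathrm{Betti}}$ is the $\mathbb F_q[t]$-module of $\sigma$-invariants of $\tilde H$; $H$ is rigid analytically trivial if the natural map $\mathbb C_\infty\{t\}\otimes_{\mathbb F_q[t]}H^{\mathrm{Betti}}\to\tilde H$ is bijective. A morphism $H_0\to H_1$ induces an $\mathbb F_q[t]$-linear map $H_0^{\mathrm{Betti}}\to H_1^{\mathrm{Betti}}$ by $\mathbb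 C_\infty\{t\}$-linear extension. *)

theory Defs
  imports Complex_Main "HOL-Computational_Algebra.Polynomial" "HOL-Library.Cardinality"
begin

section \<open>The field C_infinity, axiomatised up to isomorphism\<close>

text \<open>F_q is a finite field type 'f, q = CARD('f). A polynomial over 'f is an
element of F_q[T]; iota embeds F_q[T] into the field 'c (playing C_infinity),
v is the absolute value on 'c.\<close>

definition kfield :: "('f::{finite,field} poly \<Rightarrow> 'c::field) \<Rightarrow> 'c set" where
  "kfield \<iota> = {\<iota> a / \<iota> b | a b. b \<noteq> 0}"

definition kbar :: "('f::{finite,field} poly \<Rightarrow> 'c::field) \<Rightarrow> 'c set" where
  "kbar \<iota> = {x. \<exists>p::'c poly. p \<noteq> 0 \<and> (\<forall>i. coeff p i \<in> kfield \<iota>) \<and> poly p x = 0}"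

definition Cinf :: "('f::{finite,field} poly \<Rightarrow> 'c::field) \<Rightarrow> ('c \<Rightarrow> real) \<Rightarrow> bool" where
  "Cinf \<iota> v \<longleftrightarrow>
     (\<forall>a b. \<iota> (a + b) = \<iota> a + \<iota> b) \<and> (\<forall>a b. \<iota> (a * b) = \<iota> a * \<iota> b) \<and> \<iota> 1 = 1 \<and> inj \<iota> \<and>
     (\<forall>x. v x \<ge> 0) \<and> (\<forall>x. v x = 0 \<longleftrightarrow> x = 0) \<and> (\<forall>x y. v (x * y) = v x * v y) \<and>
     (\<forall>x y. v (x + y) \<le> max (v x) (v y)) \<and>
     (\<forall>p. p \<noteq> 0 \<longrightarrow> v (\<iota> p) = real CARD('f) ^ degree p) \<and>
     (\<forall>s::nat \<Rightarrow> 'c. (\<forall>e>0. \<exists>N. \<forall>m\<ge>N. \<forall>n\<ge>N. v (s m - s n) < e) \<longrightarrow>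
         (\<exists>L. (\<lambda>n. v (s n - L)) \<longlonglongrightarrow> 0)) \<and>
     (\<forall>p::'c poly. degree p > 0 \<longrightarrow> (\<exists>x. poly p x = 0)) \<and>
     (\<forall>x e. e > 0 \<longrightarrow> (\<exists>y\<in>kbar \<iota>. v (x - y) < e))"

text \<open>q-th root (unique in characteristic p)\<close>
definition qroot :: "nat \<Rightarrow> 'c::field \<Rightarrow> 'c" where
  "qroot q x = (THE y. y ^ q = x)"

section \<open>Left kbar[t,sigma]-modules and dual t-motives\<close>

record ('c, 'h) ktsmod =
  kscal :: "'c \<Rightarrow> 'h \<Rightarrow> 'h"
  tact :: "'h \<Rightarrow> 'h"
  sact :: "'h \<Rightarrow> 'h"

definition kpoly :: "('f::{finite,field} poly \<Rightarrow> 'c::field) \<Rightarrow> 'c poly \<Rightarrow> bool" where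
  "kpoly \<iota> p \<longleftrightarrow> (\<forall>i. coeff p i \<in> kbar \<iota>)"

text \<open>action of sum_i a_i t^i, resp. sum_i a_i sigma^i (coefficients on the left)\<close>
definition tpoly :: "('c::field, 'h::ab_group_add) ktsmod \<Rightarrow> 'c poly \<Rightarrow> 'h \<Rightarrow> 'h" where
  "tpoly M p h = (\<Sum>i\<le>degree p. kscal M (coeff p i) ((tact M ^^ i) h))"

definition spoly :: "('c::field, 'h::ab_group_add) ktsmod \<Rightarrow> 'c poly \<Rightarrow> 'h \<Rightarrow> 'h" where
  "spoly M p h = (\<Sum>i\<le>degree p. kscal M (coeff p i) ((sact M ^^ i) h))"

definition kts_module :: "('f::{finite,field} poly \<Rightarrow> 'c::field) \<Rightarrow> ('c, 'h::ab_group_add) ktsmod \<Rightarrow> bool" where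
  "kts_module \<iota> M \<longleftrightarrow>
     (\<forall>x\<in>kbar \<iota>. \<forall>h h'. kscal M x (h + h') = kscal M x h + kscal M x h') \<and>
     (\<forall>x\<in>kbar \<iota>. \<forall>y\<in>kbar \<iota>. \<forall>h. kscal M (x + y) h = kscal M x h + kscal M y h) \<and>
     (\<forall>x\<in>kbar \<iota>. \<forall>y\<in>kbar \<iota>. \<forall>h. kscal M (x * y) h = kscal M x (kscal M y h)) \<and>
     (\<forall>h. kscal M 1 h = h) \<and>
     (\<forall>h h'. tact M (h + h') = tact M h + tact M h') \<and>
     (\<forall>x\<in>kbar \<iota>. \<forall>h. tact M (kscal M x h) = kscal M x (tact M h)) \<and>
     (\<forall>h h'. sact M (h + h') = sact M h + sact M h') \<and>
     (\<forall>x\<in>kbar \<iota>. \<forall>h. sact M (kscal M x h) = kscal M (qroot CARD('f) x) (sact M h)) \<and>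
     (\<forall>h. tact M (sact M h) = sact M (tact M h))"

definition free_fin :: "('f::{finite,field} poly \<Rightarrow> 'c::field) \<Rightarrow> ('c poly \<Rightarrow> 'h \<Rightarrow> 'h::ab_group_add) \<Rightarrow> bool" where
  "free_fin \<iota> act \<longleftrightarrow> (\<exists>b::'h list. \<forall>h. \<exists>!ps::'c poly list.
      length ps = length b \<and> (\<forall>p\<in>set ps. kpoly \<iota> p) \<and> h = (\<Sum>j<length b. act (ps ! j) (b ! j)))"

definition dual_t_motive :: "('f::{finite,field} poly \<Rightarrow> 'c::field) \<Rightarrow> ('c, 'h::ab_group_add) ktsmod \<Rightarrow> bool" where
  "dual_t_motive \<iota> M \<longleftrightarrow> kts_module \<iota> M \<and> free_fin \<iota> (tpoly M) \<and> free_fin \<iota> (spoly M) \<and>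
     (\<exists>N. \<forall>n\<ge>N. \<forall>h. \<exists>h'. tpoly M ([:- \<iota> [:0, 1:], 1:] ^ n) h = sact M h')"

section \<open>Tensor products (as formal sums modulo the tensor relations)\<close>

record ('a, 'b, 'r) tens_data =
  Adom :: "'a \<Rightarrow> bool"
  Bdom :: "'b \<Rightarrow> bool"
  Rs :: "'r \<Rightarrow> bool"
  aadd :: "'a \<Rightarrow> 'a \<Rightarrow> 'a"
  azero :: 'a
  badd :: "'b \<Rightarrow> 'b \<Rightarrow> 'b"
  bzero :: 'b
  ra :: "'r \<Rightarrow> 'a \<Rightarrow> 'a"
  rb :: "'r \<Rightarrow> 'b \<Rightarrow> 'b"
  Beq :: "'b \<Rightarrow> 'b \<Rightarrow> bool"

definition tvalid :: "('a, 'b, 'r) tens_data \<Rightarrow> ('a \<times> 'b) list \<Rightarrow> bool" where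
  "tvalid D L \<longleftrightarrow> (\<forall>(a, b)\<in>set L. Adom D a \<and> Bdom D b)"

inductive tens_eq :: "('a, 'b, 'r) tens_data \<Rightarrow> ('a \<times> 'b) list \<Rightarrow> ('a \<times> 'b) list \<Rightarrow> bool"
  for D where
  refl: "tens_eq D L L"
| sym: "tens_eq D L L' \<Longrightarrow> tens_eq D L' L"
| trans: "tens_eq D L L' \<Longrightarrow> tens_eq D L' L'' \<Longrightarrow> tens_eq D L L''"
| app: "tens_eq D L L' \<Longrightarrow> tens_eq D M M' \<Longrightarrow> tens_eq D (L @ M) (L' @ M')"
| comm: "tens_eq D (L @ M) (M @ L)"
| addl: "Adom D a \<Longrightarrow> Adom D a' \<Longrightarrow> Bdom D b \<Longrightarrow> tens_eq D [(aadd D a a', b)] [(a, b), (a', b)]"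
| addr: "Adom D a \<Longrightarrow> Bdom D b \<Longrightarrow> Bdom D b' \<Longrightarrow> tens_eq D [(a, badd D b b')] [(a, b), (a, b')]"
| zl: "Bdom D b \<Longrightarrow> tens_eq D [(azero D, b)] []"
| zr: "Adom D a \<Longrightarrow> tens_eq D [(a, bzero D)] []"
| bal: "Rs D r \<Longrightarrow> Adom D a \<Longrightarrow> Bdom D b \<Longrightarrow> tens_eq D [(ra D r a, b)] [(a, rb D r b)]"
| beq: "Adom D a \<Longrightarrow> Bdom D b \<Longrightarrow> Bdom D b' \<Longrightarrow> Beq D b b' \<Longrightarrow> tens_eq D [(a, b)] [(a, b')]"

section \<open>C_infinity{t}, H tilde, Betti realisation\<close>

type_synonym 'c series = "nat \<Rightarrow> 'c"

definition tate :: "('c \<Rightarrow> real) \<Rightarrow> 'c series \<Rightarrow> bool" where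
  "tate v g \<longleftrightarrow> (\<lambda>n. v (g n)) \<longlonglongrightarrow> 0"

definition sadd :: "'c::field series \<Rightarrow> 'c series \<Rightarrow> 'c series" where
  "sadd g g' = (\<lambda>n. g n + g' n)"

definition smult_ser :: "'c::field series \<Rightarrow> 'c series \<Rightarrow> 'c series" where
  "smult_ser g g' = (\<lambda>n. \<Sum>i\<le>n. g i * g' (n - i))"

definition polyser :: "'c::field poly \<Rightarrow> 'c series" where
  "polyser p = (\<lambda>n. coeff p n)"

text \<open>g^(-1)\<close>
definition twist :: "nat \<Rightarrow> 'c::field series \<Rightarrow> 'c series" where
  "twist q g = (\<lambda>n. qroot q (g n))"

text \<open>data of C_infinity{t} tensor_{kbar[t]} H\<close>
definition tildeD :: "('f::{finite,field} poly \<Rightarrow> 'c::field) \<Rightarrow> ('c \<Rightarrow> real) \<Rightarrow> ('c, 'h::ab_group_add) ktsmod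
    \<Rightarrow> ('c series, 'h, 'c poly) tens_data" where
  "tildeD \<iota> v M = \<lparr>Adom = tate v, Bdom = (\<lambda>_. True), Rs = kpoly \<iota>, aadd = sadd, azero = (\<lambda>n. 0),
      badd = (+), bzero = 0, ra = (\<lambda>r g. smult_ser (polyser r) g), rb = tpoly M, Beq = (=)\<rparr>"

definition teq :: "('f::{finite,field} poly \<Rightarrow> 'c::field) \<Rightarrow> ('c \<Rightarrow> real) \<Rightarrow> ('c, 'h::ab_group_add) ktsmod
    \<Rightarrow> ('c series \<times> 'h) list \<Rightarrow> ('c series \<times> 'h) list \<Rightarrow> bool" where
  "teq \<iota> v M = tens_eq (tildeD \<iota> v M)"

definition sig_tilde :: "('f::{finite,field} poly \<Rightarrow> 'c::field) \<Rightarrow> ('c, 'h::ab_group_add) ktsmod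
    \<Rightarrow> ('c series \<times> 'h) list \<Rightarrow> ('c series \<times> 'h) list" where
  "sig_tilde \<iota> M L = map (\<lambda>(g, h). (twist CARD('f) g, sact M h)) L"

text \<open>representatives of elements of H^Betti\<close>
definition betti :: "('f::{finite,field} poly \<Rightarrow> 'c::field) \<Rightarrow> ('c \<Rightarrow> real) \<Rightarrow> ('c, 'h::ab_group_add) ktsmod
    \<Rightarrow> ('c series \<times> 'h) list \<Rightarrow> bool" where
  "betti \<iota> v M L \<longleftrightarrow> tvalid (tildeD \<iota> v M) L \<and> teq \<iota> v M (sig_tilde \<iota> M L) L"

definition fqser :: "('f::{finite,field} poly \<Rightarrow> 'c::field) \<Rightarrow> 'f poly \<Rightarrow> 'c series" where
  "fqser \<iota> a = polyser (map_poly (\<lambda>c. \<iota> [:c:]) a)"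

definition fqact :: "('f::{finite,field} poly \<Rightarrow> 'c::field) \<Rightarrow> 'f poly
    \<Rightarrow> ('c series \<times> 'h) list \<Rightarrow> ('c series \<times> 'h) list" where
  "fqact \<iota> a L = map (\<lambda>(g, h). (smult_ser (fqser \<iota> a) g, h)) L"

text \<open>data of C_infinity{t} tensor_{F_q[t]} H^Betti\<close>
definition bettiD :: "('f::{finite,field} poly \<Rightarrow> 'c::field) \<Rightarrow> ('c \<Rightarrow> real) \<Rightarrow> ('c, 'h::ab_group_add) ktsmod
    \<Rightarrow> ('c series, ('c series \<times> 'h) list, 'f poly) tens_data" where
  "bettiD \<iota> v M = \<lparr>Adom = tate v, Bdom = betti \<iota> v M, Rs = (\<lambda>_. True), aadd = sadd, azero = (\<lambda>n. 0),
      badd = (@), bzero = [], ra = (\<lambda>a g. smult_ser (fqser \<iota> a) g), rb = fqact \<iota>, Beq = teq \<iota> v M\<rparr>"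

definition rat_map :: "('c::field series \<times> ('c series \<times> 'h) list) list \<Rightarrow> ('c series \<times> 'h) list" where
  "rat_map K = concat (map (\<lambda>(g, L). map (\<lambda>(g', h). (smult_ser g g', h)) L) K)"

definition rigid_an_triv :: "('f::{finite,field} poly \<Rightarrow> 'c::field) \<Rightarrow> ('c \<Rightarrow> real) \<Rightarrow> ('c, 'h::ab_group_add) ktsmod \<Rightarrow> bool" where
  "rigid_an_triv \<iota> v M \<longleftrightarrow>
     (\<forall>X. tvalid (tildeD \<iota> v M) X \<longrightarrow> (\<exists>K. tvalid (bettiD \<iota> v M) K \<and> teq \<iota> v M (rat_map K) X)) \<and>
     (\<forall>K K'. tvalid (bettiD \<iota> v M) K \<longrightarrow> tvalid (bettiD \<iota> v M) K' \<longrightarrow>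
        teq \<iota> v M (rat_map K) (rat_map K') \<longrightarrow> tens_eq (bettiD \<iota> v M) K K')"

definition kts_morphism :: "('f::{finite,field} poly \<Rightarrow> 'c::field) \<Rightarrow> ('c, 'h0::ab_group_add) ktsmod
    \<Rightarrow> ('c, 'h1::ab_group_add) ktsmod \<Rightarrow> ('h0 \<Rightarrow> 'h1) \<Rightarrow> bool" where
  "kts_morphism \<iota> M0 M1 f \<longleftrightarrow> (\<forall>h h'. f (h + h') = f h + f h') \<and>
     (\<forall>x\<in>kbar \<iota>. \<forall>h. f (kscal M0 x h) = kscal M1 x (f h)) \<and>
     (\<forall>h. f (tact M0 h) = tact M1 (f h)) \<and> (\<forall>h. f (sact M0 h) = sact M1 (f h))"

definition betti_map :: "('h0 \<Rightarrow> 'h1) \<Rightarrow> ('c series \<times> 'h0) list \<Rightarrow> ('c series \<times> 'h1) list" where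
  "betti_map f L = map (\<lambda>(g, h). (g, f h)) L"

text \<open>F_q[t]-linear maps H0^Betti -> H1^Betti, on representatives\<close>
definition betti_hom :: "('f::{finite,field} poly \<Rightarrow> 'c::field) \<Rightarrow> ('c \<Rightarrow> real) \<Rightarrow> ('c, 'h0::ab_group_add) ktsmod
    \<Rightarrow> ('c, 'h1::ab_group_add) ktsmod \<Rightarrow> (('c series \<times> 'h0) list \<Rightarrow> ('c series \<times> 'h1) list) \<Rightarrow> bool" where
  "betti_hom \<iota> v M0 M1 \<psi> \<longleftrightarrow>
     (\<forall>L. betti \<iota> v M0 L \<longrightarrow> betti \<iota> v M1 (\<psi> L)) \<and>
     (\<forall>L L'. betti \<iota> v M0 L \<longrightarrow> betti \<iota> v M0 L' \<longrightarrow> teq \<iota> v M0 L L' \<longrightarrow> teq \<iota> v M1 (\<psi> L) (\<psi> L')) \<and>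
     (\<forall>L L'. betti \<iota> v M0 L \<longrightarrow> betti \<iota> v M0 L' \<longrightarrow> teq \<iota> v M1 (\<psi> (L @ L')) (\<psi> L @ \<psi> L')) \<and>
     (\<forall>a L. betti \<iota> v M0 L \<longrightarrow> teq \<iota> v M1 (\<psi> (fqact \<iota> a L)) (fqact \<iota> a (\<psi> L)))"

definition hom_eq :: "('f::{finite,field} poly \<Rightarrow> 'c::field) \<Rightarrow> ('c \<Rightarrow> real) \<Rightarrow> ('c, 'h0::ab_group_add) ktsmod
    \<Rightarrow> ('c, 'h1::ab_group_add) ktsmod \<Rightarrow> (('c series \<times> 'h0) list \<Rightarrow> ('c series \<times> 'h1) list)
    \<Rightarrow> (('c series \<times> 'h0) list \<Rightarrow> ('c series \<times> 'h1) list) \<Rightarrow> bool" where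
  "hom_eq \<iota> v M0 M1 \<psi> \<phi> \<longleftrightarrow> (\<forall>L. betti \<iota> v M0 L \<longrightarrow> teq \<iota> v M1 (\<psi> L) (\<phi> L))"

end

theory Submission
  imports Defs "HOL-Algebra.Algebraic_Closure_Type" "HOL-Algebra.Multiplicative_Group"
begin

(* Fix a kbar[t]-basis b_1, ..., b_r of H_1. An element of C_infinity{t} (x) H_1 is determined by
   its coordinate vector in C_infinity{t}^r: the coordinate map respects the tensor relations,
   and every tensor is equivalent to its canonical form sum_j phi_j (x) b_j. Rigid analytic
   triviality of H_0 writes 1 (x) h as a C_infinity{t}-combination of Betti elements, so the
   coordinates of f h are determined by f on H_0^Betti; this gives injectivity.

   If f induces a * psi for some nonzero a in F_q[t], the same identity shows that every
   coordinate of f h is a times a Tate series. The coefficients of a have absolute value at most 1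
   and its leading coefficient has absolute value 1, so the ultrametric inequality forces that
   series to be a polynomial, and a top-down recursion puts its coefficients in kbar. Hence
   f = a f' for a kbar[t]-linear f', which commutes with sigma because the coefficients of a lie
   in F_q and are fixed by the q-th root; and f' induces psi since a is not a zero divisor. *)

hide_const (open) Polynomials.degree Polynomials.lead_coeff UnivPoly.coeff UnivPoly.monom
  module.smult

lemma ring_of_type_algebra_simps [simp]:
  "carrier (ring_of_type_algebra :: 'a::field ring) = UNIV"
  "add (ring_of_type_algebra :: 'a ring) x y = x + y"
  "mult (ring_of_type_algebra :: 'a ring) x y = x * y"
  "zero (ring_of_type_algebra :: 'a ring) = 0"
  "one (ring_of_type_algebra :: 'a ring) = 1"
  by (simp_all add: ring_of_type_algebra_def)

lemma nat_pow_ring_of_type_algebra [simp]: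
  "x [^]\<^bsub>(ring_of_type_algebra :: 'a::field ring)\<^esub> n = x ^ n"
  by (induction n) (simp_all add: mult.commute)

lemma a_inv_ring_of_type_algebra [simp]: "a_inv (ring_of_type_algebra :: 'a::field ring) x = - x"
proof -
  interpret ring "ring_of_type_algebra :: 'a ring" by (rule ring_from_type_algebra)
  show ?thesis by (rule minus_equality) simp_all
qed

lemma m_inv_ring_of_type_algebra:
  "(x::'a::field) \<noteq> 0 \<Longrightarrow> m_inv (ring_of_type_algebra :: 'a ring) x = inverse x"
proof -
  assume "x \<noteq> 0"
  interpret field "ring_of_type_algebra :: 'a ring" by (rule field_from_type_algebra)
  show ?thesis by (rule comm_inv_char) (simp_all add: \<open>x \<noteq> 0\<close>)
qed

lemma eval_ring_of_type_algebra:
  "ring.eval (ring_of_type_algebra :: 'a::field ring) p x = poly (Poly (rev p)) x"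
proof (induction p)
  case Nil
  then show ?case by (simp add: ring.eval.simps(1)[OF ring_from_type_algebra])
next
  case (Cons a p)
  have "ring.eval (ring_of_type_algebra :: 'a ring) (a # p) x
      = a * x ^ length p + ring.eval ring_of_type_algebra p x"
    using ring.eval.simps(2)[OF ring_from_type_algebra, of a p] by simp
  also have "\<dots> = poly (Poly (rev (a # p))) x"
    using Cons by (simp add: Poly_append poly_monom algebra_simps)
  finally show ?case .
qed

lemma finite_field_power_card: "(x :: 'a::{finite,field}) ^ CARD('a) = x"
proof (cases "x = 0")
  case False
  let ?G = "Multiplicative_Group.mult_of (ring_of_type_algebra :: 'a ring)"
  interpret group ?G
    using field.field_mult_group[OF field_from_type_algebra] .
  have "x [^]\<^bsub>?G\<^esub> order ?G = \<one>\<^bsub>?G\<^esub>"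
    by (rule pow_order_eq_1) (simp add: False)
  moreover have "order ?G = CARD('a) - 1"
    using field.order_mult_of[OF field_from_type_algebra] by (simp add: order_def)
  ultimately have "x ^ (CARD('a) - 1) = 1"
    by (simp add: Multiplicative_Group.nat_pow_mult_of)
  then show ?thesis
    using finite_UNIV_card_ge_0[where ?'a = 'a] by (simp add: power_eq_if[of x "CARD('a)"])
qed (simp add: finite_UNIV_card_ge_0)

lemma sum_atMost_split_ends:
  assumes "(n::nat) > 0"
  shows "(\<Sum>k\<le>n. f k) = f 0 + f n + (\<Sum>k\<in>{1..<n}. f k)"
proof -
  have "{..n} = insert 0 (insert n {1..<n})" using assms by auto
  then show ?thesis using assms by (simp add: add.assoc)
qed

text \<open>All x in F_q are roots of the polynomial ((X + 1)^q - X^q - 1) of degree less than q, so it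
  vanishes identically.\<close>
lemma finite_field_card_choose_eq_0:
  assumes "0 < k" "k < CARD('f::{finite,field})"
  shows "of_nat (CARD('f) choose k) = (0::'f)"
proof -
  define q where "q = CARD('f)"
  have q0: "q > 0" by (simp add: q_def finite_UNIV_card_ge_0)
  define P :: "'f poly" where "P = (\<Sum>j\<in>{1..<q}. monom (of_nat (q choose j)) j)"
  have root: "poly P c = 0" for c :: 'f
  proof -
    have "poly P c = (\<Sum>j\<in>{1..<q}. of_nat (q choose j) * c ^ j)"
      by (simp add: P_def poly_sum poly_monom)
    also have "\<dots> = (c + 1) ^ q - c ^ q - 1"
      using binomial_ring[of c 1 q]
        sum_atMost_split_ends[OF q0, of "\<lambda>j. of_nat (q choose j) * c ^ j * 1 ^ (q - j)"]
      by simp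
    also have "\<dots> = 0"
      using finite_field_power_card[of "c + 1"] finite_field_power_card[of c] by (simp add: q_def)
    finally show ?thesis .
  qed
  have "P = 0"
  proof (rule ccontr)
    assume "P \<noteq> 0"
    then have "card {x. poly P x = 0} \<le> degree P" by (rule card_poly_roots_bound)
    moreover have "{x. poly P x = 0} = UNIV" using root by auto
    moreover have "degree P < q"
      unfolding P_def
      by (rule degree_sum_less) (use q0 in \<open>auto intro: le_less_trans[OF degree_monom_le]\<close>)
    ultimately show False by (simp add: q_def)
  qed
  then have "coeff P k = 0" by simp
  moreover have "coeff P k = of_nat (q choose k)"
    using assms by (simp add: P_def coeff_sum coeff_monom q_def)
  ultimately show ?thesis by (simp add: q_def)
qed

lemma convolution_split_at_degree:
  fixes A :: "'a::comm_ring_1 poly"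
  assumes "degree A = d"
  shows "(\<Sum>i\<le>k + d. coeff A i * c (k + d - i))
      = coeff A d * c k + (\<Sum>i<d. coeff A i * c (k + d - i))"
proof -
  have "(\<Sum>i\<le>k + d. coeff A i * c (k + d - i)) = (\<Sum>i\<le>d. coeff A i * c (k + d - i))"
    by (rule sum.mono_neutral_right) (auto simp: assms coeff_eq_0)
  also have "\<dots> = coeff A d * c k + (\<Sum>i<d. coeff A i * c (k + d - i))"
    by (simp add: lessThan_Suc_atMost[symmetric])
  finally show ?thesis .
qed

lemma strong_downward_induct [consumes 1, case_names above step]:
  assumes "N0 \<le> k"
    and above: "\<And>n. N \<le> n \<Longrightarrow> P n"
    and step: "\<And>k. N0 \<le> k \<Longrightarrow> (\<And>n. k < n \<Longrightarrow> P n) \<Longrightarrow> P k"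
  shows "P (k::nat)"
  using assms(1)
proof (induction "N - k" arbitrary: k rule: less_induct)
  case less
  show ?case
  proof (cases "N \<le> k")
    case True
    then show ?thesis by (rule above)
  next
    case False
    show ?thesis
    proof (rule step[OF less.prems])
      fix n assume "k < n"
      show "P n"
      proof (cases "N \<le> n")
        case True
        then show ?thesis by (rule above)
      next
        case False
        show ?thesis
          by (rule less.hyps) (use less.prems \<open>k < n\<close> False in auto)
      qed
    qed
  qed
qed

lemma fps_nth_Abs_fps_eq [simp]: "fps_nth (Abs_fps g) = g"
  by (simp add: Abs_fps_inverse)

lemma fps_nth_zero_eq [simp]: "fps_nth 0 = (\<lambda>n. 0)"
  by (simp add: fun_eq_iff)

lemma Abs_fps_sadd: "Abs_fps (sadd g g') = Abs_fps g + Abs_fps g'"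
  by (simp add: fps_ext sadd_def)

lemma Abs_fps_smult_ser: "Abs_fps (smult_ser g g') = Abs_fps g * Abs_fps g'"
  by (simp add: fps_ext smult_ser_def fps_mult_nth atLeast0AtMost)

lemma Abs_fps_polyser: "Abs_fps (polyser p) = fps_of_poly p"
  by (simp add: fps_ext polyser_def)

lemma sadd_fps_nth: "sadd (fps_nth f) (fps_nth g) = fps_nth (f + g)"
  by (simp add: sadd_def fun_eq_iff)

lemma smult_ser_fps_nth: "smult_ser (fps_nth f) (fps_nth g) = fps_nth (f * g)"
  by (simp add: smult_ser_def fun_eq_iff fps_mult_nth atLeast0AtMost)

lemma Abs_fps_fqser: "Abs_fps (fqser \<iota> a) = fps_of_poly (map_poly (\<lambda>c. \<iota> [:c:]) a)"
  by (simp add: fqser_def Abs_fps_polyser)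

section \<open>The field C_infinity\<close>

locale cinf =
  fixes \<iota> :: "'f::{finite,field} poly \<Rightarrow> 'c::field" and v :: "'c \<Rightarrow> real"
  assumes Cinf: "Cinf \<iota> v"
begin

lemma iota_add: "\<iota> (a + b) = \<iota> a + \<iota> b" using Cinf unfolding Cinf_def by blast
lemma iota_mult: "\<iota> (a * b) = \<iota> a * \<iota> b" using Cinf unfolding Cinf_def by blast
lemma iota_1 [simp]: "\<iota> 1 = 1" using Cinf unfolding Cinf_def by blast
lemma inj_iota: "inj \<iota>" using Cinf unfolding Cinf_def by blast

lemma iota_0 [simp]: "\<iota> 0 = 0"
proof -
  have "\<iota> 0 + \<iota> 0 = \<iota> 0 + 0" using iota_add[of 0 0] by simp
  then show ?thesis by (rule add_left_imp_eq)
qed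

lemma iota_minus: "\<iota> (- a) = - \<iota> a"
  using iota_add[of a "- a"] by (simp add: eq_neg_iff_add_eq_0 add.commute)

lemma iota_eq_0_iff: "\<iota> a = 0 \<longleftrightarrow> a = 0"
  using inj_iota iota_0 by (metis injD)

lemma iota_power: "\<iota> (a ^ n) = \<iota> a ^ n"
  by (induction n) (simp_all add: iota_mult)

lemma iota_of_nat: "\<iota> (of_nat n) = of_nat n"
  by (induction n) (simp_all add: iota_add)

lemma v_nonneg: "v x \<ge> 0" using Cinf unfolding Cinf_def by blast
lemma v_eq_0_iff: "v x = 0 \<longleftrightarrow> x = 0" using Cinf unfolding Cinf_def by blast
lemma v_mult: "v (x * y) = v x * v y" using Cinf unfolding Cinf_def by blast
lemma v_ultrametric: "v (x + y) \<le> max (v x) (v y)" using Cinf unfolding Cinf_def by blast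
lemma v_iota: "p \<noteq> 0 \<Longrightarrow> v (\<iota> p) = real CARD('f) ^ degree p"
  using Cinf unfolding Cinf_def by blast

lemma v_0 [simp]: "v 0 = 0" using v_eq_0_iff by simp

lemma v_1 [simp]: "v 1 = 1"
  using v_mult[of 1 1] v_eq_0_iff[of 1] by simp

lemma v_uminus [simp]: "v (- x) = v x"
proof -
  have "v (- 1) ^ 2 = 1" using v_mult[of "- 1" "- 1"] by (simp add: power2_eq_square)
  then have "v (- 1) = 1" using v_nonneg[of "- 1"] by (simp add: power2_eq_1_iff)
  then show ?thesis using v_mult[of "- 1" x] by simp
qed

lemma v_iota_const: "c \<noteq> 0 \<Longrightarrow> v (\<iota> [:c:]) = 1"
  using v_iota[of "[:c:]"] by simp

lemma v_iota_const_le_1: "v (\<iota> [:c:]) \<le> 1"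
  by (cases "c = 0") (simp_all add: v_iota_const)

lemma v_sum_le: "(\<And>i. i \<in> A \<Longrightarrow> v (f i) \<le> c) \<Longrightarrow> 0 \<le> c \<Longrightarrow> v (sum f A) \<le> c"
proof (induction A rule: infinite_finite_induct)
  case (insert x F)
  have "v (f x + sum f F) \<le> max (v (f x)) (v (sum f F))" by (rule v_ultrametric)
  also have "\<dots> \<le> c" using insert by auto
  finally show ?case using insert by simp
qed simp_all

lemma v_sum_less: "(\<And>i. i \<in> A \<Longrightarrow> v (f i) < e) \<Longrightarrow> 0 < e \<Longrightarrow> v (sum f A) < e"
proof (induction A rule: infinite_finite_induct)
  case (insert x F)
  have "v (f x + sum f F) \<le> max (v (f x)) (v (sum f F))" by (rule v_ultrametric)
  also have "\<dots> < e" using insert by auto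
  finally show ?case using insert by simp
qed simp_all

subsection \<open>The algebraic closure kbar of k\<close>

lemma kfield_iota: "\<iota> a \<in> kfield \<iota>"
  unfolding kfield_def by (rule CollectI, rule exI[of _ a], rule exI[of _ 1]) simp

lemma kfieldE:
  assumes "x \<in> kfield \<iota>"
  obtains a b where "b \<noteq> 0" "\<iota> b \<noteq> 0" "x = \<iota> a / \<iota> b"
  using assms iota_eq_0_iff unfolding kfield_def by blast

lemma kfieldI: "b \<noteq> 0 \<Longrightarrow> \<iota> a / \<iota> b \<in> kfield \<iota>"
  unfolding kfield_def by blast

lemma kfield_add: assumes "x \<in> kfield \<iota>" "y \<in> kfield \<iota>" shows "x + y \<in> kfield \<iota>"
proof -
  obtain a b where ab: "b \<noteq> 0" "\<iota> b \<noteq> 0" "x = \<iota> a / \<iota> b" using assms(1) by (rule kfieldE)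
  obtain c d where cd: "d \<noteq> 0" "\<iota> d \<noteq> 0" "y = \<iota> c / \<iota> d" using assms(2) by (rule kfieldE)
  have "x + y = \<iota> (a * d + c * b) / \<iota> (b * d)"
    using ab cd by (simp add: iota_add iota_mult field_simps)
  then show ?thesis using kfieldI ab cd by simp
qed

lemma kfield_mult: assumes "x \<in> kfield \<iota>" "y \<in> kfield \<iota>" shows "x * y \<in> kfield \<iota>"
proof -
  obtain a b where ab: "b \<noteq> 0" "\<iota> b \<noteq> 0" "x = \<iota> a / \<iota> b" using assms(1) by (rule kfieldE)
  obtain c d where cd: "d \<noteq> 0" "\<iota> d \<noteq> 0" "y = \<iota> c / \<iota> d" using assms(2) by (rule kfieldE)
  have "x * y = \<iota> (a * c) / \<iota> (b * d)"
    using ab cd by (simp add: iota_mult)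
  then show ?thesis using kfieldI ab cd by simp
qed

lemma kfield_uminus: assumes "x \<in> kfield \<iota>" shows "- x \<in> kfield \<iota>"
proof -
  obtain a b where ab: "b \<noteq> 0" "\<iota> b \<noteq> 0" "x = \<iota> a / \<iota> b" using assms by (rule kfieldE)
  have "- x = \<iota> (- a) / \<iota> b" using ab by (simp add: iota_minus)
  then show ?thesis using kfieldI ab by simp
qed

lemma kfield_inverse: assumes "x \<in> kfield \<iota>" shows "inverse x \<in> kfield \<iota>"
proof -
  obtain a b where ab: "b \<noteq> 0" "\<iota> b \<noteq> 0" "x = \<iota> a / \<iota> b" using assms by (rule kfieldE)
  show ?thesis
  proof (cases "a = 0")
    case True
    then show ?thesis using ab kfieldI[of 1 0] by simp
  next
    case False
    then have "inverse x = \<iota> b / \<iota> a" using ab by simp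
    then show ?thesis using kfieldI False by simp
  qed
qed

lemma subfield_kfield: "subfield (kfield \<iota>) ring_of_type_algebra"
proof -
  interpret field "ring_of_type_algebra :: 'c ring" by (rule field_from_type_algebra)
  show ?thesis
  proof (rule subfieldI'[OF subringI])
    show "kfield \<iota> \<subseteq> carrier ring_of_type_algebra" by simp
    show "\<one>\<^bsub>ring_of_type_algebra\<^esub> \<in> kfield \<iota>" using kfield_iota[of 1] by simp
    show "\<ominus>\<^bsub>ring_of_type_algebra\<^esub> h \<in> kfield \<iota>" if "h \<in> kfield \<iota>" for h
      using that kfield_uminus by simp
    show "h1 \<otimes>\<^bsub>ring_of_type_algebra\<^esub> h2 \<in> kfield \<iota>" if "h1 \<in> kfield \<iota>" "h2 \<in> kfield \<iota>"
      for h1 h2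
      using that kfield_mult by simp
    show "h1 \<oplus>\<^bsub>ring_of_type_algebra\<^esub> h2 \<in> kfield \<iota>" if "h1 \<in> kfield \<iota>" "h2 \<in> kfield \<iota>"
      for h1 h2
      using that kfield_add by simp
    show "inv\<^bsub>ring_of_type_algebra\<^esub> k \<in> kfield \<iota>"
      if "k \<in> kfield \<iota> - {\<zero>\<^bsub>ring_of_type_algebra\<^esub>}" for k
      using that kfield_inverse m_inv_ring_of_type_algebra[of k] by auto
  qed
qed

lemma kbar_iff_algebraic:
  "x \<in> kbar \<iota> \<longleftrightarrow> (ring.algebraic ring_of_type_algebra over (kfield \<iota>)) x"
proof
  assume "x \<in> kbar \<iota>"
  then obtain P where P: "P \<noteq> 0" "\<forall>i. coeff P i \<in> kfield \<iota>" "poly P x = 0"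
    unfolding kbar_def by blast
  define p where "p = rev (coeffs P)"
  have "p \<noteq> []" using P(1) by (simp add: p_def)
  moreover have "set p \<subseteq> kfield \<iota>" using P(2) by (auto simp: p_def coeffs_def)
  moreover have "hd p \<noteq> 0" using P(1) by (simp add: p_def hd_rev last_coeffs_eq_coeff_degree)
  ultimately have "p \<in> carrier (univ_poly ring_of_type_algebra (kfield \<iota>))"
    unfolding univ_poly_carrier[symmetric] polynomial_def by simp
  moreover have "ring.eval ring_of_type_algebra p x = \<zero>\<^bsub>ring_of_type_algebra\<^esub>"
    using P(3) by (simp add: eval_ring_of_type_algebra p_def)
  ultimately show "(ring.algebraic ring_of_type_algebra over (kfield \<iota>)) x"
    using ring.algebraicI[OF ring_from_type_algebra] \<open>p \<noteq> []\<close> by blast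
next
  assume "(ring.algebraic ring_of_type_algebra over (kfield \<iota>)) x"
  then obtain p where p: "p \<in> carrier (univ_poly ring_of_type_algebra (kfield \<iota>))" "p \<noteq> []"
    "ring.eval ring_of_type_algebra p x = \<zero>\<^bsub>ring_of_type_algebra\<^esub>"
    using domain.algebraicE[OF field.axioms(1)[OF field_from_type_algebra]
        subfieldE(1)[OF subfield_kfield]]
    by auto
  have pp: "set p \<subseteq> kfield \<iota>" "hd p \<noteq> 0"
    using p(1,2) unfolding univ_poly_carrier[symmetric] polynomial_def by auto
  define P where "P = Poly (rev p)"
  have "P \<noteq> 0"
  proof
    assume "P = 0"
    then obtain n where "rev p = replicate n 0" unfolding P_def Poly_eq_0 by blast
    then have "p = replicate n 0" by (metis rev_replicate rev_rev_ident)
    then show False using pp(2) p(2) by (cases n) auto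
  qed
  moreover have "coeff P i \<in> kfield \<iota>" for i
  proof (cases "i < length p")
    case True
    then have "rev p ! i \<in> set (rev p)" by (intro nth_mem) simp
    then show ?thesis using pp(1) True by (auto simp: P_def nth_default_def)
  next
    case False
    then show ?thesis using kfield_iota[of 0] by (simp add: P_def nth_default_def)
  qed
  moreover have "poly P x = 0" using p(3) by (simp add: eval_ring_of_type_algebra P_def)
  ultimately show "x \<in> kbar \<iota>" unfolding kbar_def by blast
qed

lemma subfield_kbar: "subfield (kbar \<iota>) ring_of_type_algebra"
proof -
  have "kbar \<iota> = {x \<in> carrier ring_of_type_algebra.
      (ring.algebraic ring_of_type_algebra over (kfield \<iota>)) x}"
    using kbar_iff_algebraic by auto
  then show ?thesis
    using field.subfield_of_algebraics[OF field_from_type_algebra subfield_kfield] by simp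
qed

lemma kbar_add: "x \<in> kbar \<iota> \<Longrightarrow> y \<in> kbar \<iota> \<Longrightarrow> x + y \<in> kbar \<iota>"
  using subringE(7)[OF subfieldE(1)[OF subfield_kbar]] by simp

lemma kbar_mult: "x \<in> kbar \<iota> \<Longrightarrow> y \<in> kbar \<iota> \<Longrightarrow> x * y \<in> kbar \<iota>"
  using subringE(6)[OF subfieldE(1)[OF subfield_kbar]] by simp

lemma kbar_uminus: "x \<in> kbar \<iota> \<Longrightarrow> - x \<in> kbar \<iota>"
  using subringE(5)[OF subfieldE(1)[OF subfield_kbar]] by simp

lemma kbar_0: "0 \<in> kbar \<iota>"
  using subringE(2)[OF subfieldE(1)[OF subfield_kbar]] by simp

lemma kbar_diff: "x \<in> kbar \<iota> \<Longrightarrow> y \<in> kbar \<iota> \<Longrightarrow> x - y \<in> kbar \<iota>"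
  using kbar_add[of x "- y"] kbar_uminus[of y] by simp

lemma kbar_inverse: "x \<in> kbar \<iota> \<Longrightarrow> inverse x \<in> kbar \<iota>"
  using ring.subfield_m_inv(1)[OF ring_from_type_algebra subfield_kbar, of x]
    m_inv_ring_of_type_algebra[of x] kbar_0
  by (cases "x = 0") simp_all

lemma kbar_iota: "\<iota> a \<in> kbar \<iota>"
  using domain.algebraic_self[OF field.axioms(1)[OF field_from_type_algebra]
      subfieldE(1)[OF subfield_kfield] kfield_iota]
  by (simp add: kbar_iff_algebraic)

lemma kbar_sum: "(\<And>i. i \<in> A \<Longrightarrow> f i \<in> kbar \<iota>) \<Longrightarrow> sum f A \<in> kbar \<iota>"
  by (induction A rule: infinite_finite_induct) (auto simp: kbar_0 kbar_add)

lemma kpoly_0 [simp]: "kpoly \<iota> 0"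
  by (simp add: kpoly_def kbar_0)

lemma kpoly_pCons [simp]: "kpoly \<iota> (pCons a p) \<longleftrightarrow> a \<in> kbar \<iota> \<and> kpoly \<iota> p"
  by (auto simp: kpoly_def coeff_pCons split: nat.splits)

lemma kpoly_add: "kpoly \<iota> p \<Longrightarrow> kpoly \<iota> r \<Longrightarrow> kpoly \<iota> (p + r)"
  by (simp add: kpoly_def kbar_add)

lemma kpoly_smult: "a \<in> kbar \<iota> \<Longrightarrow> kpoly \<iota> p \<Longrightarrow> kpoly \<iota> (smult a p)"
  by (simp add: kpoly_def kbar_mult)

lemma kpoly_mult: "kpoly \<iota> p \<Longrightarrow> kpoly \<iota> r \<Longrightarrow> kpoly \<iota> (p * r)"
  by (simp add: kpoly_def coeff_mult kbar_sum kbar_mult)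

subsection \<open>Frobenius\<close>

lemma of_nat_card_choose_eq_0:
  assumes "0 < k" "k < CARD('f)"
  shows "of_nat (CARD('f) choose k) = (0::'c)"
proof -
  have "of_nat (CARD('f) choose k) = \<iota> (of_nat (CARD('f) choose k))" by (simp add: iota_of_nat)
  also have "(of_nat (CARD('f) choose k) :: 'f poly) = [:of_nat (CARD('f) choose k):]"
    by (rule of_nat_poly)
  also have "\<dots> = 0" using finite_field_card_choose_eq_0[OF assms] by simp
  finally show ?thesis by simp
qed

lemma power_card_add: "(x + y :: 'c) ^ CARD('f) = x ^ CARD('f) + y ^ CARD('f)"
proof -
  define q where "q = CARD('f)"
  have q0: "q > 0" by (simp add: q_def finite_UNIV_card_ge_0)
  have "(x + y) ^ q = (\<Sum>k\<le>q. of_nat (q choose k) * x ^ k * y ^ (q - k))" by (rule binomial_ring)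
  also have "\<dots> = y ^ q + x ^ q + (\<Sum>k\<in>{1..<q}. of_nat (q choose k) * x ^ k * y ^ (q - k))"
    using sum_atMost_split_ends[OF q0, of "\<lambda>k. of_nat (q choose k) * x ^ k * y ^ (q - k)"]
    by simp
  also have "(\<Sum>k\<in>{1..<q}. of_nat (q choose k) * x ^ k * y ^ (q - k)) = (0::'c)"
    by (rule sum.neutral) (auto simp: of_nat_card_choose_eq_0 q_def)
  finally show ?thesis by (simp add: q_def add.commute)
qed

lemma power_card_inject: assumes "(x::'c) ^ CARD('f) = y ^ CARD('f)" shows "x = y"
proof -
  have "x ^ CARD('f) = (x - y) ^ CARD('f) + y ^ CARD('f)"
    using power_card_add[of "x - y" y] by simp
  then have "(x - y) ^ CARD('f) = 0" using assms by simp
  then show ?thesis by simp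
qed

lemma qroot_power_card: "qroot CARD('f) (x ^ CARD('f)) = (x::'c)"
  unfolding qroot_def by (rule the_equality) (auto intro: power_card_inject)

lemma qroot_iota_const: "qroot CARD('f) (\<iota> [:c:]) = \<iota> [:c:]"
proof -
  have "\<iota> [:c:] ^ CARD('f) = \<iota> ([:c:] ^ CARD('f))" by (simp add: iota_power)
  also have "[:c:] ^ CARD('f) = [:c:]" by (simp add: poly_const_pow finite_field_power_card)
  finally show ?thesis using qroot_power_card[of "\<iota> [:c:]"] by simp
qed

abbreviation fq_poly :: "'f poly \<Rightarrow> 'c poly" where
  "fq_poly a \<equiv> map_poly (\<lambda>c. \<iota> [:c:]) a"

lemma coeff_fq_poly: "coeff (fq_poly a) i = \<iota> [:coeff a i:]"
  by (simp add: coeff_map_poly)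

lemma degree_fq_poly: "degree (fq_poly a) = degree a"
  by (rule degree_map_poly) (simp add: iota_eq_0_iff)

lemma fq_poly_eq_0_iff: "fq_poly a = 0 \<longleftrightarrow> a = 0"
  by (rule map_poly_eq_0_iff) (simp_all add: iota_eq_0_iff)

lemma kpoly_fq_poly: "kpoly \<iota> (fq_poly a)"
  by (simp add: kpoly_def coeff_map_poly kbar_iota)

subsection \<open>Tate series\<close>

lemma tate_iff: "tate v g \<longleftrightarrow> (\<forall>r>0. \<exists>N. \<forall>n\<ge>N. v (g n) < r)"
  unfolding tate_def LIMSEQ_iff using v_nonneg by simp

lemma tate_zero: "tate v (\<lambda>n. 0)"
  unfolding tate_iff by simp

lemma tate_sadd: assumes "tate v g" "tate v g'" shows "tate v (sadd g g')"
  unfolding tate_iff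
proof (intro allI impI)
  fix r :: real assume r: "r > 0"
  obtain N1 where "\<forall>n\<ge>N1. v (g n) < r" using assms(1) r unfolding tate_iff by blast
  moreover obtain N2 where "\<forall>n\<ge>N2. v (g' n) < r" using assms(2) r unfolding tate_iff by blast
  ultimately have "\<forall>n\<ge>max N1 N2. v (sadd g g' n) < r"
    unfolding sadd_def by (meson le_less_trans max.boundedE max_less_iff_conj v_ultrametric)
  then show "\<exists>N. \<forall>n\<ge>N. v (sadd g g' n) < r" by blast
qed

lemma tate_bounded: assumes "tate v g" obtains B where "B > 0" "\<And>n. v (g n) \<le> B"
proof -
  have "Bseq (\<lambda>n. v (g n))"
    using assms unfolding tate_def by (intro convergent_imp_Bseq convergentI)
  then obtain B where "B > 0" "\<forall>n. norm (v (g n)) \<le> B" by (rule BseqE)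
  then show ?thesis using that v_nonneg by (metis abs_of_nonneg real_norm_def)
qed

lemma tate_smult_ser: assumes "tate v g" "tate v g'" shows "tate v (smult_ser g g')"
  unfolding tate_iff
proof (intro allI impI)
  fix r :: real assume r: "r > 0"
  obtain B1 where B1: "B1 > 0" "\<And>n. v (g n) \<le> B1" using tate_bounded[OF assms(1)] by blast
  obtain B2 where B2: "B2 > 0" "\<And>n. v (g' n) \<le> B2" using tate_bounded[OF assms(2)] by blast
  define B where "B = max B1 B2"
  have B: "B > 0" "\<And>n. v (g n) \<le> B" "\<And>n. v (g' n) \<le> B"
    using B1 B2 unfolding B_def by (auto simp: le_max_iff_disj)
  define e where "e = r / (2 * B)"
  have e: "e > 0" "e * B = r / 2" using r B by (simp_all add: e_def)
  obtain N1 where N1: "\<forall>n\<ge>N1. v (g n) < e" using assms(1) e unfolding tate_iff by blast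
  obtain N2 where N2: "\<forall>n\<ge>N2. v (g' n) < e" using assms(2) e unfolding tate_iff by blast
  have "v (smult_ser g g' n) < r" if n: "n \<ge> N1 + N2" for n
  proof -
    have "v (g i * g' (n - i)) \<le> r / 2" for i
    proof (cases "i \<ge> N1")
      case True
      then have "v (g i) * v (g' (n - i)) \<le> e * B"
        using N1 B v_nonneg e by (intro mult_mono) (auto simp: less_imp_le)
      then show ?thesis using e by (simp add: v_mult)
    next
      case False
      then have "v (g' (n - i)) * v (g i) \<le> e * B"
        using n N2 B v_nonneg e by (intro mult_mono) (auto simp: less_imp_le)
      then show ?thesis using e by (simp add: v_mult mult.commute)
    qed
    then have "v (smult_ser g g' n) \<le> r / 2"
      unfolding smult_ser_def using r by (intro v_sum_le) auto
    then show ?thesis using r by simp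
  qed
  then show "\<exists>N. \<forall>n\<ge>N. v (smult_ser g g' n) < r" by blast
qed

lemma tate_polyser: "tate v (polyser p)"
proof -
  have "eventually (\<lambda>n. v (polyser p n) = 0) sequentially"
    by (rule eventually_sequentiallyI[of "Suc (degree p)"]) (simp add: polyser_def coeff_eq_0)
  then show ?thesis unfolding tate_def by (rule tendsto_eventually)
qed

definition tate_fps :: "'c fps \<Rightarrow> bool" where
  "tate_fps f \<longleftrightarrow> tate v (fps_nth f)"

lemma tate_fps_Abs_fps: "tate_fps (Abs_fps g) \<longleftrightarrow> tate v g"
  by (simp add: tate_fps_def)

lemma tate_fps_add: "tate_fps f \<Longrightarrow> tate_fps g \<Longrightarrow> tate_fps (f + g)"
  using tate_sadd unfolding tate_fps_def by (metis sadd_fps_nth)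

lemma tate_fps_mult: "tate_fps f \<Longrightarrow> tate_fps g \<Longrightarrow> tate_fps (f * g)"
  using tate_smult_ser unfolding tate_fps_def by (metis smult_ser_fps_nth)

lemma tate_fps_0: "tate_fps 0"
  using tate_zero by (simp add: tate_fps_def)

lemma tate_fps_of_poly: "tate_fps (fps_of_poly p)"
proof -
  have "fps_nth (fps_of_poly p) = polyser p" by (simp add: fun_eq_iff polyser_def)
  then show ?thesis using tate_polyser[of p] by (simp add: tate_fps_def)
qed

lemma tate_fps_sum_list: "(\<And>x. x \<in> set xs \<Longrightarrow> tate_fps x) \<Longrightarrow> tate_fps (sum_list xs)"
  by (induction xs) (auto simp: tate_fps_0 tate_fps_add)

subsection \<open>Division by elements of F_q[t]\<close>

text \<open>Beyond the degree of x, the coefficient y_k is a combination of y_(k+1), ..., y_(k+d) with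
  coefficients of absolute value at most 1, since the leading coefficient of a has absolute
  value 1. By the ultrametric inequality and downward induction, every such y_k is smaller than
  any bound that the tail eventually respects, hence 0.\<close>
lemma tate_fps_quotient_is_poly:
  assumes a: "a \<noteq> 0" and y: "tate_fps y"
    and eq: "fps_of_poly (fq_poly a) * y = fps_of_poly x"
  shows "\<exists>Y. y = fps_of_poly Y"
proof -
  define A where "A = fq_poly a"
  define d where "d = degree A"
  define N0 where "N0 = Suc (degree x)"
  have lead: "v (coeff A d) = 1"
    using a by (simp add: A_def d_def coeff_fq_poly degree_fq_poly v_iota_const)
  have recursion: "coeff A d * y $ k = - (\<Sum>i<d. coeff A i * y $ (k + d - i))" if "N0 \<le> k" for k
  proof -
    have "(\<Sum>i\<le>k + d. coeff A i * y $ (k + d - i)) = (fps_of_poly A * y) $ (k + d)"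
      by (simp add: fps_mult_nth atLeast0AtMost)
    also have "\<dots> = 0" using eq that by (simp add: A_def N0_def coeff_eq_0)
    finally show ?thesis
      using convolution_split_at_degree[of A d "\<lambda>n. y $ n" k] by (simp add: d_def eq_neg_iff_add_eq_0)
  qed
  have zero: "y $ k = 0" if k: "N0 \<le> k" for k
  proof (rule ccontr)
    define e where "e = v (y $ k)"
    assume "y $ k \<noteq> 0"
    then have e: "e > 0" using v_nonneg v_eq_0_iff by (simp add: e_def less_le)
    obtain N where N: "\<forall>n\<ge>N. v (y $ n) < e" using y e unfolding tate_fps_def tate_iff by blast
    have "v (y $ n) < e" if "N0 \<le> n" for n
      using that
    proof (induction n rule: strong_downward_induct[where N = N])
      case (above n)
      then show ?case using N by blast
    next
      case (step n)
      have "v (y $ n) = v (coeff A d * y $ n)"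
        using lead by (simp add: v_mult)
      also have "\<dots> = v (\<Sum>i<d. coeff A i * y $ (n + d - i))"
        using recursion[OF step.hyps] by simp
      also have "\<dots> < e"
      proof (rule v_sum_less[OF _ e])
        fix i assume "i \<in> {..<d}"
        then have "v (y $ (n + d - i)) < e" by (intro step.IH) auto
        moreover have "v (coeff A i * y $ (n + d - i)) \<le> v (y $ (n + d - i))"
          using v_iota_const_le_1 v_nonneg by (simp add: A_def coeff_fq_poly v_mult mult_left_le_one_le)
        ultimately show "v (coeff A i * y $ (n + d - i)) < e" by simp
      qed
      finally show ?case .
    qed
    from this[OF k] show False by (simp add: e_def)
  qed
  have "y = fps_of_poly (Poly (map (fps_nth y) [0..<N0]))"
  proof (rule fps_ext)
    fix n show "y $ n = fps_of_poly (Poly (map (fps_nth y) [0..<N0])) $ n"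
      using zero[of n] by (cases "n < N0") (auto simp: nth_default_def)
  qed
  then show ?thesis by blast
qed

lemma kpoly_quotient:
  assumes a: "a \<noteq> 0" and eq: "fq_poly a * Y = x" and x: "kpoly \<iota> x"
  shows "kpoly \<iota> Y"
  unfolding kpoly_def
proof
  fix k
  define A where "A = fq_poly a"
  define d where "d = degree A"
  have lead: "coeff A d \<noteq> 0"
    using a by (simp add: A_def d_def fq_poly_eq_0_iff)
  show "coeff Y k \<in> kbar \<iota>"
    using le0[of k]
  proof (induction k rule: strong_downward_induct[where N = "Suc (degree Y)"])
    case (above n)
    then show ?case by (simp add: coeff_eq_0 kbar_0)
  next
    case (step k)
    have "coeff x (k + d) = (\<Sum>i\<le>k + d. coeff A i * coeff Y (k + d - i))"
      using eq[symmetric] by (simp add: A_def coeff_mult)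
    also have "\<dots> = coeff A d * coeff Y k + (\<Sum>i<d. coeff A i * coeff Y (k + d - i))"
      by (rule convolution_split_at_degree) (simp add: d_def)
    finally have "coeff Y k
        = inverse (coeff A d) * (coeff x (k + d) - (\<Sum>i<d. coeff A i * coeff Y (k + d - i)))"
      using lead by (simp add: field_simps)
    moreover have "inverse (coeff A d) \<in> kbar \<iota>"
      by (simp add: A_def coeff_fq_poly kbar_inverse kbar_iota)
    moreover have "coeff x (k + d) \<in> kbar \<iota>" using x by (simp add: kpoly_def)
    moreover have "(\<Sum>i<d. coeff A i * coeff Y (k + d - i)) \<in> kbar \<iota>"
      by (intro kbar_sum kbar_mult step.IH) (auto simp: A_def coeff_fq_poly kbar_iota)
    ultimately show ?case by (simp add: kbar_mult kbar_diff)
  qed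
qed

end

section \<open>Modules over kbar[t, sigma]\<close>

locale kts_mod = cinf \<iota> v
  for \<iota> :: "'f::{finite,field} poly \<Rightarrow> 'c::field" and v +
  fixes M :: "('c, 'h::ab_group_add) ktsmod"
  assumes kts: "kts_module \<iota> M"
begin

abbreviation "S \<equiv> kscal M"
abbreviation "T \<equiv> tact M"
abbreviation "Sg \<equiv> sact M"

lemma S_add: "x \<in> kbar \<iota> \<Longrightarrow> S x (h + h') = S x h + S x h'"
  using kts unfolding kts_module_def by blast
lemma S_add_left: "x \<in> kbar \<iota> \<Longrightarrow> y \<in> kbar \<iota> \<Longrightarrow> S (x + y) h = S x h + S y h"
  using kts unfolding kts_module_def by blast
lemma S_mult: "x \<in> kbar \<iota> \<Longrightarrow> y \<in> kbar \<iota> \<Longrightarrow> S (x * y) h = S x (S y h)"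
  using kts unfolding kts_module_def by blast
lemma T_add: "T (h + h') = T h + T h'"
  using kts unfolding kts_module_def by blast
lemma T_S: "x \<in> kbar \<iota> \<Longrightarrow> T (S x h) = S x (T h)"
  using kts unfolding kts_module_def by blast
lemma Sg_add: "Sg (h + h') = Sg h + Sg h'"
  using kts unfolding kts_module_def by blast
lemma Sg_S: "x \<in> kbar \<iota> \<Longrightarrow> Sg (S x h) = S (qroot CARD('f) x) (Sg h)"
  using kts unfolding kts_module_def by blast
lemma T_Sg: "T (Sg h) = Sg (T h)"
  using kts unfolding kts_module_def by blast

lemma S_zero [simp]: "x \<in> kbar \<iota> \<Longrightarrow> S x 0 = 0"
  using S_add[of x 0 0] by simp
lemma S_0 [simp]: "S 0 h = 0"
  using S_add_left[OF kbar_0 kbar_0, of h] by simp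
lemma T_zero [simp]: "T 0 = 0"
  using T_add[of 0 0] by simp
lemma Sg_zero [simp]: "Sg 0 = 0"
  using Sg_add[of 0 0] by simp

lemma T_sum: "T (sum f A) = (\<Sum>i\<in>A. T (f i))"
  by (induction A rule: infinite_finite_induct) (simp_all add: T_add)

lemma tpoly_0 [simp]: "tpoly M 0 h = 0"
  by (simp add: tpoly_def)

lemma tpoly_pCons:
  assumes "kpoly \<iota> p"
  shows "tpoly M (pCons a p) h = S a h + T (tpoly M p h)"
proof -
  have tpoly_eq: "tpoly M r h = (\<Sum>i<N. S (coeff r i) ((T ^^ i) h))" if "degree r < N" for r N
    unfolding tpoly_def
    by (rule sum.mono_neutral_left) (use that in \<open>auto simp: coeff_eq_0\<close>)
  define N where "N = Suc (degree p)"
  have "tpoly M (pCons a p) h = (\<Sum>i<Suc N. S (coeff (pCons a p) i) ((T ^^ i) h))"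
    by (rule tpoly_eq) (metis N_def degree_pCons_le le_imp_less_Suc)
  also have "\<dots> = S a h + (\<Sum>i<N. S (coeff p i) ((T ^^ Suc i) h))"
    by (subst sum.lessThan_Suc_shift) simp
  also have "(\<Sum>i<N. S (coeff p i) ((T ^^ Suc i) h)) = T (\<Sum>i<N. S (coeff p i) ((T ^^ i) h))"
    using assms by (simp add: T_sum T_S kpoly_def)
  also have "(\<Sum>i<N. S (coeff p i) ((T ^^ i) h)) = tpoly M p h"
    by (rule tpoly_eq[symmetric]) (simp add: N_def)
  finally show ?thesis .
qed

lemma tpoly_add: "kpoly \<iota> p \<Longrightarrow> tpoly M p (h + h') = tpoly M p h + tpoly M p h'"
  by (induction p) (simp_all add: tpoly_pCons S_add T_add algebra_simps)

lemma tpoly_zero [simp]: "kpoly \<iota> p \<Longrightarrow> tpoly M p 0 = 0"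
  using tpoly_add[of p 0 0] by simp

lemma tpoly_sum: "kpoly \<iota> p \<Longrightarrow> tpoly M p (sum f A) = (\<Sum>i\<in>A. tpoly M p (f i))"
  by (induction A rule: infinite_finite_induct) (simp_all add: tpoly_add)

lemma tpoly_add_poly:
  "kpoly \<iota> p \<Longrightarrow> kpoly \<iota> r \<Longrightarrow> tpoly M (p + r) h = tpoly M p h + tpoly M r h"
proof (induction p r rule: poly_induct2)
  case (pCons a p b r)
  have "tpoly M (pCons a p + pCons b r) h = S (a + b) h + T (tpoly M (p + r) h)"
    using pCons by (simp add: tpoly_pCons kpoly_add)
  also have "\<dots> = tpoly M (pCons a p) h + tpoly M (pCons b r) h"
    using pCons by (simp add: tpoly_pCons S_add_left T_add algebra_simps)
  finally show ?case .
qed simp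

lemma tpoly_S: "x \<in> kbar \<iota> \<Longrightarrow> kpoly \<iota> p \<Longrightarrow> tpoly M p (S x h) = S x (tpoly M p h)"
  by (induction p) (simp_all add: tpoly_pCons S_add T_S S_mult[symmetric] mult.commute)

lemma tpoly_smult: "x \<in> kbar \<iota> \<Longrightarrow> kpoly \<iota> p \<Longrightarrow> tpoly M (smult x p) h = S x (tpoly M p h)"
  by (induction p) (simp_all add: tpoly_pCons kpoly_smult S_add T_S S_mult)

lemma tpoly_mult: "kpoly \<iota> p \<Longrightarrow> kpoly \<iota> r \<Longrightarrow> tpoly M (p * r) h = tpoly M p (tpoly M r h)"
proof (induction p)
  case (pCons a p)
  have "tpoly M (pCons a p * r) h = tpoly M (smult a r + pCons 0 (p * r)) h" by simp
  also have "\<dots> = tpoly M (smult a r) h + tpoly M (pCons 0 (p * r)) h"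
    using pCons by (intro tpoly_add_poly) (simp_all add: kpoly_smult kpoly_mult kbar_0)
  also have "\<dots> = tpoly M (pCons a p) (tpoly M r h)"
    using pCons by (simp add: tpoly_smult tpoly_pCons kpoly_mult kbar_0)
  finally show ?case .
qed simp

lemma tpoly_T: "kpoly \<iota> p \<Longrightarrow> T (tpoly M p h) = tpoly M p (T h)"
  by (induction p) (simp_all add: tpoly_pCons T_add T_S)

lemma tpoly_fq_poly_Sg: "Sg (tpoly M (fq_poly a) h) = tpoly M (fq_poly a) (Sg h)"
proof -
  have "\<forall>i. coeff p i \<in> kbar \<iota> \<and> qroot CARD('f) (coeff p i) = coeff p i
      \<Longrightarrow> Sg (tpoly M p h) = tpoly M p (Sg h)" for p
  proof (induction p)
    case (pCons a p)
    then have "a \<in> kbar \<iota>" "qroot CARD('f) a = a"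
      "\<forall>i. coeff p i \<in> kbar \<iota> \<and> qroot CARD('f) (coeff p i) = coeff p i"
      by (metis coeff_pCons_0 coeff_pCons_Suc)+
    then show ?case
      using pCons.IH by (simp add: tpoly_pCons Sg_add Sg_S T_Sg[symmetric] kpoly_def)
  qed simp
  then show ?thesis by (simp add: coeff_map_poly kbar_iota qroot_iota_const)
qed

end

section \<open>Modules free of finite rank over kbar[t]\<close>

locale kt_free_mod = kts_mod \<iota> v M
  for \<iota> :: "'f::{finite,field} poly \<Rightarrow> 'c::field" and v and M :: "('c, 'h::ab_group_add) ktsmod" +
  assumes free: "free_fin \<iota> (tpoly M)"
begin

definition basis :: "'h list" where
  "basis = (SOME b. \<forall>h. \<exists>!ps. length ps = length b \<and> (\<forall>p\<in>set ps. kpoly \<iota> p) \<and>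
     h = (\<Sum>j<length b. tpoly M (ps ! j) (b ! j)))"

abbreviation rank :: nat where "rank \<equiv> length basis"

lemma basis_unique_repr:
  "\<exists>!ps. length ps = rank \<and> (\<forall>p\<in>set ps. kpoly \<iota> p) \<and> h = (\<Sum>j<rank. tpoly M (ps ! j) (basis ! j))"
proof -
  have "\<exists>b. \<forall>h. \<exists>!ps. length ps = length b \<and> (\<forall>p\<in>set ps. kpoly \<iota> p) \<and>
      h = (\<Sum>j<length b. tpoly M (ps ! j) (b ! j))"
    using free unfolding free_fin_def .
  then show ?thesis unfolding basis_def by (rule someI_ex[THEN spec])
qed

definition coord_list :: "'h \<Rightarrow> 'c poly list" where
  "coord_list h = (THE ps. length ps = rank \<and> (\<forall>p\<in>set ps. kpoly \<iota> p) \<and>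
     h = (\<Sum>j<rank. tpoly M (ps ! j) (basis ! j)))"

definition coord :: "'h \<Rightarrow> nat \<Rightarrow> 'c poly" where
  "coord h j = (if j < rank then coord_list h ! j else 0)"

lemma coord_list: "length (coord_list h) = rank \<and> (\<forall>p\<in>set (coord_list h). kpoly \<iota> p) \<and>
    h = (\<Sum>j<rank. tpoly M (coord_list h ! j) (basis ! j))"
  unfolding coord_list_def by (rule theI'[OF basis_unique_repr])

lemma kpoly_coord: "kpoly \<iota> (coord h j)"
  using coord_list[of h] by (auto simp: coord_def)

lemma coord_repr: "h = (\<Sum>j<rank. tpoly M (coord h j) (basis ! j))"
  using coord_list[of h] by (simp add: coord_def)

lemma coord_ge_rank: "rank \<le> j \<Longrightarrow> coord h j = 0"
  by (simp add: coord_def)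

lemma coord_unique:
  assumes "\<And>j. kpoly \<iota> (c j)" "\<And>j. rank \<le> j \<Longrightarrow> c j = 0"
    and "h = (\<Sum>j<rank. tpoly M (c j) (basis ! j))"
  shows "coord h j = c j"
proof (cases "j < rank")
  case True
  have list: "map c [0..<rank] = coord_list h"
    unfolding coord_list_def by (rule the1_equality[OF basis_unique_repr, symmetric]) (use assms in auto)
  then show ?thesis using True by (simp add: coord_def flip: list)
qed (use assms(2) in \<open>simp add: coord_def\<close>)

lemma coord_eqI: "(\<And>j. coord h j = coord h' j) \<Longrightarrow> h = h'"
  using coord_repr[of h] coord_repr[of h'] by simp

lemma coord_add: "coord (h + h') j = coord h j + coord h' j"
proof (rule coord_unique)
  show "kpoly \<iota> (coord h j + coord h' j)" for j by (simp add: kpoly_add kpoly_coord)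
  show "coord h j + coord h' j = 0" if "rank \<le> j" for j using that by (simp add: coord_ge_rank)
  show "h + h' = (\<Sum>j<rank. tpoly M (coord h j + coord h' j) (basis ! j))"
    by (subst coord_repr[of h], subst coord_repr[of h'])
      (simp add: sum.distrib tpoly_add_poly kpoly_coord)
qed

lemma coord_tpoly: assumes "kpoly \<iota> p" shows "coord (tpoly M p h) j = p * coord h j"
proof (rule coord_unique)
  show "kpoly \<iota> (p * coord h j)" for j by (simp add: kpoly_mult kpoly_coord assms)
  show "p * coord h j = 0" if "rank \<le> j" for j using that by (simp add: coord_ge_rank)
  show "tpoly M p h = (\<Sum>j<rank. tpoly M (p * coord h j) (basis ! j))"
    by (subst coord_repr[of h]) (simp add: assms tpoly_sum tpoly_mult kpoly_coord)
qed

lemma coord_zero [simp]: "coord 0 j = 0"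
  using coord_tpoly[of 0 0 j] by simp

lemma tpoly_inject:
  assumes "kpoly \<iota> A" "A \<noteq> 0" "tpoly M A x = tpoly M A y"
  shows "x = y"
proof (rule coord_eqI)
  fix j
  have "A * coord x j = A * coord y j" using assms coord_tpoly by metis
  then show "coord x j = coord y j" using assms(2) by simp
qed

lemma exists_tpoly_eq_if_coord_dvd:
  assumes "\<And>j. \<exists>Y. kpoly \<iota> Y \<and> coord h j = A * Y" "kpoly \<iota> A"
  shows "\<exists>h'. h = tpoly M A h'"
proof -
  obtain Y where Y: "\<And>j. kpoly \<iota> (Y j)" "\<And>j. coord h j = A * Y j"
    using assms(1) by metis
  define c where "c j = (if j < rank then Y j else 0)" for j
  define h' where "h' = (\<Sum>j<rank. tpoly M (c j) (basis ! j))"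
  have "coord h' j = c j" for j
    by (rule coord_unique) (auto simp: c_def h'_def Y(1))
  then have "coord (tpoly M A h') j = coord h j" for j
    using Y(2)[of j] coord_ge_rank[of j h] by (simp add: coord_tpoly[OF assms(2)] c_def)
  then show ?thesis by (metis coord_eqI)
qed

end

section \<open>The tensor product C_infinity{t} (x) H\<close>

lemma tildeD_simps [simp]:
  "Adom (tildeD \<iota> v M) = tate v" "Bdom (tildeD \<iota> v M) = (\<lambda>_. True)"
  "Rs (tildeD \<iota> v M) = kpoly \<iota>" "aadd (tildeD \<iota> v M) = sadd"
  "azero (tildeD \<iota> v M) = (\<lambda>n. 0)" "badd (tildeD \<iota> v M) = (+)" "bzero (tildeD \<iota> v M) = 0"
  "ra (tildeD \<iota> v M) = (\<lambda>r g. smult_ser (polyser r) g)" "rb (tildeD \<iota> v M) = tpoly M"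
  "Beq (tildeD \<iota> v M) = (=)"
  by (simp_all add: tildeD_def)

lemma bettiD_simps [simp]:
  "Adom (bettiD \<iota> v M) = tate v" "Bdom (bettiD \<iota> v M) = betti \<iota> v M"
  by (simp_all add: bettiD_def)

lemma teq_refl: "teq \<iota> v M L L"
  unfolding teq_def by (rule tens_eq.refl)

lemma teq_sym: "teq \<iota> v M L L' \<Longrightarrow> teq \<iota> v M L' L"
  unfolding teq_def by (rule tens_eq.sym)

lemma teq_trans [trans]: "teq \<iota> v M L L' \<Longrightarrow> teq \<iota> v M L' L'' \<Longrightarrow> teq \<iota> v M L L''"
  unfolding teq_def by (rule tens_eq.trans)

lemma teq_append: "teq \<iota> v M L L' \<Longrightarrow> teq \<iota> v M K K' \<Longrightarrow> teq \<iota> v M (L @ K) (L' @ K')"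
  unfolding teq_def by (rule tens_eq.app)

lemma teq_append_commute: "teq \<iota> v M (L @ K) (K @ L)"
  unfolding teq_def by (rule tens_eq.comm)

lemma teq_Cons: "teq \<iota> v M [x] [y] \<Longrightarrow> teq \<iota> v M L L' \<Longrightarrow> teq \<iota> v M (x # L) (y # L')"
  using teq_append[of \<iota> v M "[x]" "[y]" L L'] by simp

lemma teq_sadd: "tate v a \<Longrightarrow> tate v a' \<Longrightarrow> teq \<iota> v M [(sadd a a', h)] [(a, h), (a', h)]"
  unfolding teq_def using tens_eq.addl[of "tildeD \<iota> v M" a a' h] by simp

lemma teq_add: "tate v a \<Longrightarrow> teq \<iota> v M [(a, h + h')] [(a, h), (a, h')]"
  unfolding teq_def using tens_eq.addr[of "tildeD \<iota> v M" a h h'] by simp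

lemma teq_zero_left: "teq \<iota> v M [(\<lambda>n. 0, h)] []"
  unfolding teq_def using tens_eq.zl[of "tildeD \<iota> v M" h] by simp

lemma teq_zero_right: "tate v a \<Longrightarrow> teq \<iota> v M [(a, 0)] []"
  unfolding teq_def using tens_eq.zr[of "tildeD \<iota> v M" a] by simp

lemma teq_balance:
  "kpoly \<iota> r \<Longrightarrow> tate v a \<Longrightarrow> teq \<iota> v M [(smult_ser (polyser r) a, h)] [(a, tpoly M r h)]"
  unfolding teq_def using tens_eq.bal[of "tildeD \<iota> v M" r a h] by simp

lemma betti_imp_tvalid: "betti \<iota> v M L \<Longrightarrow> tvalid (tildeD \<iota> v M) L"
  by (simp add: betti_def)

lemma tvalid_bettiD_memD:
  "tvalid (bettiD \<iota> v M) K \<Longrightarrow> (g, L) \<in> set K \<Longrightarrow> tate v g \<and> betti \<iota> v M L"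
  by (auto simp: tvalid_def)

lemma betti_map_append: "betti_map f (L @ K) = betti_map f L @ betti_map f K"
  by (simp add: betti_map_def)

lemma betti_map_rat_map:
  "betti_map f (rat_map K) = rat_map (map (\<lambda>(g, L). (g, betti_map f L)) K)"
  by (induction K) (auto simp: rat_map_def betti_map_def)

lemma betti_map_comp: "betti_map f (betti_map f' L) = betti_map (\<lambda>h. f (f' h)) L"
  by (induction L) (auto simp: betti_map_def)

lemma tvalid_betti_map: "tvalid (tildeD \<iota> v M0) L \<Longrightarrow> tvalid (tildeD \<iota> v M1) (betti_map f L)"
  by (auto simp: tvalid_def betti_map_def)

context kt_free_mod
begin

text \<open>The coordinate vector of a tensor in C_infinity{t}^rank; series are multiplied as formal
  power series.\<close>
definition tcoord :: "('c series \<times> 'h) list \<Rightarrow> nat \<Rightarrow> 'c fps" where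
  "tcoord L j = sum_list (map (\<lambda>(g, h). Abs_fps g * fps_of_poly (coord h j)) L)"

lemma tcoord_Nil [simp]: "tcoord [] j = 0"
  by (simp add: tcoord_def)

lemma tcoord_Cons: "tcoord ((g, h) # L) j = Abs_fps g * fps_of_poly (coord h j) + tcoord L j"
  by (simp add: tcoord_def)

lemma tcoord_append: "tcoord (L @ K) j = tcoord L j + tcoord K j"
  by (simp add: tcoord_def)

lemma teq_imp_tcoord_eq: "teq \<iota> v M L K \<Longrightarrow> tcoord L = tcoord K"
  unfolding teq_def
proof (induction rule: tens_eq.induct)
  case (app L L' K K')
  then show ?case by (simp add: fun_eq_iff tcoord_append)
next
  case (comm L K)
  then show ?case by (simp add: fun_eq_iff tcoord_append add.commute)
next
  case (addl a a' b)
  then show ?case by (simp add: fun_eq_iff tcoord_def Abs_fps_sadd distrib_right)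
next
  case (addr a b b')
  then show ?case by (simp add: fun_eq_iff tcoord_def coord_add fps_of_poly_add distrib_left)
next
  case (zl b)
  then show ?case by (simp add: fun_eq_iff tcoord_def fps_zero_def)
next
  case (bal r a b)
  then show ?case
    by (simp add: fun_eq_iff tcoord_def Abs_fps_smult_ser Abs_fps_polyser coord_tpoly
        fps_of_poly_mult mult_ac)
qed (simp_all add: fun_eq_iff tcoord_def)

lemma tate_fps_tcoord: "tvalid (tildeD \<iota> v M) L \<Longrightarrow> tate_fps (tcoord L j)"
  by (induction L) (auto simp: tvalid_def tcoord_def tate_fps_0 tate_fps_add tate_fps_mult
      tate_fps_Abs_fps tate_fps_of_poly)

definition canon_tensor :: "(nat \<Rightarrow> 'c fps) \<Rightarrow> nat list \<Rightarrow> ('c series \<times> 'h) list" where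
  "canon_tensor \<phi> js = map (\<lambda>j. (fps_nth (\<phi> j), basis ! j)) js"

lemma canon_tensor_zero: "teq \<iota> v M (canon_tensor (\<lambda>j. 0) js) []"
proof (induction js)
  case (Cons j js)
  have "teq \<iota> v M ([(\<lambda>n. 0, basis ! j)] @ canon_tensor (\<lambda>j. 0) js) ([] @ [])"
    by (rule teq_append[OF teq_zero_left Cons.IH])
  then show ?case by (simp add: canon_tensor_def fun_eq_iff)
qed (simp add: canon_tensor_def teq_refl)

lemma canon_tensor_add:
  assumes "\<And>j. tate_fps (\<phi> j)" "\<And>j. tate_fps (\<psi> j)"
  shows "teq \<iota> v M (canon_tensor \<phi> js @ canon_tensor \<psi> js) (canon_tensor (\<lambda>j. \<phi> j + \<psi> j) js)"
proof (induction js)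
  case (Cons j js)
  define x where "x = (fps_nth (\<phi> j), basis ! j)"
  define y where "y = (fps_nth (\<psi> j), basis ! j)"
  define A where "A = canon_tensor \<phi> js"
  define B where "B = canon_tensor \<psi> js"
  have "teq \<iota> v M ([x] @ ((A @ [y]) @ B)) ([x] @ (([y] @ A) @ B))"
    by (rule teq_append[OF teq_refl teq_append[OF teq_append_commute teq_refl]])
  moreover have "teq \<iota> v M ([x, y] @ (A @ B))
      ([(sadd (fps_nth (\<phi> j)) (fps_nth (\<psi> j)), basis ! j)] @ canon_tensor (\<lambda>j. \<phi> j + \<psi> j) js)"
  proof (rule teq_append)
    show "teq \<iota> v M [x, y] [(sadd (fps_nth (\<phi> j)) (fps_nth (\<psi> j)), basis ! j)]"
      unfolding x_def y_def
      by (rule teq_sym, rule teq_sadd) (use assms in \<open>simp_all add: tate_fps_def\<close>)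
    show "teq \<iota> v M (A @ B) (canon_tensor (\<lambda>j. \<phi> j + \<psi> j) js)"
      using Cons.IH by (simp add: A_def B_def)
  qed
  moreover have "canon_tensor \<phi> (j # js) @ canon_tensor \<psi> (j # js) = [x] @ ((A @ [y]) @ B)"
    by (simp add: canon_tensor_def x_def y_def A_def B_def)
  moreover have "[(sadd (fps_nth (\<phi> j)) (fps_nth (\<psi> j)), basis ! j)] @ canon_tensor (\<lambda>j. \<phi> j + \<psi> j) js
      = canon_tensor (\<lambda>j. \<phi> j + \<psi> j) (j # js)"
    by (simp add: canon_tensor_def sadd_fps_nth)
  ultimately show ?case
    using teq_trans[of \<iota> v M "[x] @ ((A @ [y]) @ B)" "[x] @ (([y] @ A) @ B)"] by simp
qed (simp add: canon_tensor_def teq_refl)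

lemma teq_sum_list:
  assumes "tate v g"
  shows "teq \<iota> v M [(g, sum_list (map f js))] (map (\<lambda>j. (g, f j)) js)"
proof (induction js)
  case (Cons j js)
  have "teq \<iota> v M [(g, f j + sum_list (map f js))] [(g, f j), (g, sum_list (map f js))]"
    by (rule teq_add[OF assms])
  also have "teq \<iota> v M [(g, f j), (g, sum_list (map f js))] ((g, f j) # map (\<lambda>j. (g, f j)) js)"
    by (rule teq_Cons[OF teq_refl Cons.IH])
  finally show ?case by simp
qed (use teq_zero_right[OF assms] in simp)

lemma teq_canon_tensor_single:
  assumes "tate v g"
  shows "teq \<iota> v M [(g, h)] (canon_tensor (tcoord [(g, h)]) [0..<rank])"
proof -
  have repr: "teq \<iota> v M [(g, h)] (map (\<lambda>j. (g, tpoly M (coord h j) (basis ! j))) [0..<rank])"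
    using teq_sum_list[OF assms, of "\<lambda>j. tpoly M (coord h j) (basis ! j)" "[0..<rank]"]
      coord_repr[of h]
    by (simp add: interv_sum_list_conv_sum_set_nat atLeast0LessThan)
  have balance: "teq \<iota> v M (map (\<lambda>j. (g, tpoly M (coord h j) (basis ! j))) js)
      (map (\<lambda>j. (smult_ser (polyser (coord h j)) g, basis ! j)) js)" for js
  proof (induction js)
    case (Cons j js)
    show ?case
      using teq_Cons[OF teq_sym[OF teq_balance[OF kpoly_coord assms]] Cons.IH] by simp
  qed (simp add: teq_refl)
  have "tcoord [(g, h)] j = Abs_fps (smult_ser (polyser (coord h j)) g)" for j
    by (simp add: tcoord_def Abs_fps_smult_ser Abs_fps_polyser mult.commute)
  then show ?thesis using teq_trans[OF repr balance] by (simp add: canon_tensor_def)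
qed

lemma teq_canon_tensor: "tvalid (tildeD \<iota> v M) L \<Longrightarrow> teq \<iota> v M L (canon_tensor (tcoord L) [0..<rank])"
proof (induction L)
  case Nil
  have "tcoord [] = (\<lambda>j. 0)" by (simp add: fun_eq_iff)
  then show ?case using teq_sym[OF canon_tensor_zero] by simp
next
  case (Cons x L)
  obtain g h where x: "x = (g, h)" by (cases x)
  have g: "tate v g" and L: "tvalid (tildeD \<iota> v M) L" using Cons.prems x by (auto simp: tvalid_def)
  have "teq \<iota> v M ([(g, h)] @ L)
      (canon_tensor (tcoord [(g, h)]) [0..<rank] @ canon_tensor (tcoord L) [0..<rank])"
    by (rule teq_append[OF teq_canon_tensor_single[OF g] Cons.IH[OF L]])
  also have "teq \<iota> v M (canon_tensor (tcoord [(g, h)]) [0..<rank] @ canon_tensor (tcoord L) [0..<rank])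
      (canon_tensor (\<lambda>j. tcoord [(g, h)] j + tcoord L j) [0..<rank])"
    by (rule canon_tensor_add) (use g L in \<open>simp_all add: tate_fps_tcoord tvalid_def\<close>)
  also have "(\<lambda>j. tcoord [(g, h)] j + tcoord L j) = tcoord (x # L)"
    by (simp add: fun_eq_iff x tcoord_Cons)
  finally show ?case using x by simp
qed

lemma tcoord_eq_imp_teq:
  assumes "tvalid (tildeD \<iota> v M) L" "tvalid (tildeD \<iota> v M) K" "tcoord L = tcoord K"
  shows "teq \<iota> v M L K"
proof -
  have "teq \<iota> v M L (canon_tensor (tcoord K) [0..<rank])"
    using teq_canon_tensor[OF assms(1)] assms(3) by simp
  also have "teq \<iota> v M (canon_tensor (tcoord K) [0..<rank]) K"
    by (rule teq_sym[OF teq_canon_tensor[OF assms(2)]])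
  finally show ?thesis .
qed

lemma tcoord_rat_map: "tcoord (rat_map K) j = sum_list (map (\<lambda>(g, L). Abs_fps g * tcoord L j) K)"
proof -
  have "tcoord (map (\<lambda>(g', h). (smult_ser g g', h)) L) j = Abs_fps g * tcoord L j" for g L
    by (induction L) (auto simp: tcoord_Cons Abs_fps_smult_ser distrib_left mult.assoc)
  then show ?thesis
    by (induction K) (auto simp: rat_map_def tcoord_append)
qed

lemma tcoord_fqact: "tcoord (fqact \<iota> a L) j = fps_of_poly (fq_poly a) * tcoord L j"
  by (induction L) (auto simp: fqact_def tcoord_Cons Abs_fps_smult_ser Abs_fps_fqser
      distrib_left mult.assoc)

lemma tcoord_betti_map_tpoly:
  "kpoly \<iota> A \<Longrightarrow> tcoord (betti_map (tpoly M A) L) j = fps_of_poly A * tcoord L j"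
  by (induction L) (auto simp: betti_map_def tcoord_Cons coord_tpoly fps_of_poly_mult algebra_simps)

lemma tcoord_one: "tcoord [(polyser 1, h)] j = fps_of_poly (coord h j)"
  by (simp add: tcoord_def Abs_fps_polyser)

end

section \<open>Morphisms and their Betti realisations\<close>

locale kts_hom_setting = m0: kts_mod \<iota> v M0 + m1: kt_free_mod \<iota> v M1
  for \<iota> :: "'f::{finite,field} poly \<Rightarrow> 'c::field" and v
    and M0 :: "('c, 'h0::ab_group_add) ktsmod" and M1 :: "('c, 'h1::ab_group_add) ktsmod"
begin

lemma morphism_add: "kts_morphism \<iota> M0 M1 f \<Longrightarrow> f (h + h') = f h + f h'"
  unfolding kts_morphism_def by blast

lemma morphism_zero: "kts_morphism \<iota> M0 M1 f \<Longrightarrow> f 0 = 0"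
  using morphism_add[of f 0 0] by simp

lemma morphism_tpoly:
  assumes "kts_morphism \<iota> M0 M1 f" "kpoly \<iota> p"
  shows "f (tpoly M0 p h) = tpoly M1 p (f h)"
  using assms(2)
proof (induction p)
  case (pCons a p)
  then show ?case
    using assms(1) unfolding kts_morphism_def
    by (simp add: m0.tpoly_pCons m1.tpoly_pCons)
qed (simp add: morphism_zero[OF assms(1)])

lemma teq_betti_map:
  assumes f: "kts_morphism \<iota> M0 M1 f"
  shows "teq \<iota> v M0 L K \<Longrightarrow> teq \<iota> v M1 (betti_map f L) (betti_map f K)"
  unfolding teq_def[of _ _ M0]
proof (induction rule: tens_eq.induct)
  case (sym L L')
  from sym.IH show ?case by (rule teq_sym)
next
  case (trans L L' L'')
  from trans.IH show ?case by (rule teq_trans)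
next
  case (app L L' K K')
  then show ?case by (simp add: betti_map_append teq_append)
next
  case (comm L K)
  then show ?case by (simp add: betti_map_append teq_append_commute)
next
  case (addl a a' b)
  then show ?case by (simp add: betti_map_def teq_sadd)
next
  case (addr a b b')
  then show ?case by (simp add: betti_map_def teq_add morphism_add[OF f])
next
  case (zl b)
  then show ?case by (simp add: betti_map_def teq_zero_left)
next
  case (zr a)
  then show ?case by (simp add: betti_map_def teq_zero_right morphism_zero[OF f])
next
  case (bal r a b)
  then show ?case by (simp add: betti_map_def teq_balance morphism_tpoly[OF f])
qed (simp_all add: teq_refl)

lemma rigid_an_trivE:
  assumes "rigid_an_triv \<iota> v M0"
  obtains K where "tvalid (bettiD \<iota> v M0) K" "teq \<iota> v M0 (rat_map K) [(polyser 1, h)]"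
proof -
  have "tvalid (tildeD \<iota> v M0) [(polyser 1, h)]" by (simp add: tvalid_def m0.tate_polyser)
  then show ?thesis using assms that unfolding rigid_an_triv_def by blast
qed

lemma fps_coord_morphism:
  assumes f: "kts_morphism \<iota> M0 M1 f"
    and K: "teq \<iota> v M0 (rat_map K) [(polyser 1, h)]"
  shows "fps_of_poly (m1.coord (f h) j)
    = sum_list (map (\<lambda>(g, L). Abs_fps g * m1.tcoord (betti_map f L) j) K)"
proof -
  have "fps_of_poly (m1.coord (f h) j) = m1.tcoord (betti_map f [(polyser 1, h)]) j"
    by (simp add: betti_map_def m1.tcoord_one)
  also have "\<dots> = m1.tcoord (betti_map f (rat_map K)) j"
    by (simp add: m1.teq_imp_tcoord_eq[OF teq_betti_map[OF f K]])
  also have "\<dots> = sum_list (map (\<lambda>(g, L). Abs_fps g * m1.tcoord (betti_map f L) j) K)"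
    unfolding betti_map_rat_map m1.tcoord_rat_map map_map
    by (intro arg_cong[where f = sum_list] map_cong) auto
  finally show ?thesis .
qed

lemma morphism_eq_if_betti_eq:
  assumes rig: "rigid_an_triv \<iota> v M0"
    and f: "kts_morphism \<iota> M0 M1 f" and f': "kts_morphism \<iota> M0 M1 f'"
    and eq: "hom_eq \<iota> v M0 M1 (betti_map f) (betti_map f')"
  shows "f = f'"
proof
  fix h
  obtain K where K: "tvalid (bettiD \<iota> v M0) K" "teq \<iota> v M0 (rat_map K) [(polyser 1, h)]"
    using rigid_an_trivE[OF rig] by blast
  have "m1.tcoord (betti_map f L) = m1.tcoord (betti_map f' L)" if "(g, L) \<in> set K" for g L
    using eq tvalid_bettiD_memD[OF K(1) that] unfolding hom_eq_def by (intro m1.teq_imp_tcoord_eq) blast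
  then have "fps_of_poly (m1.coord (f h) j) = fps_of_poly (m1.coord (f' h) j)" for j
    unfolding fps_coord_morphism[OF f K(2)] fps_coord_morphism[OF f' K(2)]
    by (intro arg_cong[where f = sum_list] map_cong) auto
  then show "f h = f' h" by (intro m1.coord_eqI) (simp add: fps_of_poly_eq_iff)
qed

lemma coord_morphism_dvd:
  assumes rig: "rigid_an_triv \<iota> v M0" and psi: "betti_hom \<iota> v M0 M1 \<psi>" and a: "a \<noteq> 0"
    and f: "kts_morphism \<iota> M0 M1 f"
    and eq: "hom_eq \<iota> v M0 M1 (betti_map f) (\<lambda>L. fqact \<iota> a (\<psi> L))"
  shows "\<exists>Y. kpoly \<iota> Y \<and> m1.coord (f h) j = m0.fq_poly a * Y"
proof -
  obtain K where K: "tvalid (bettiD \<iota> v M0) K" "teq \<iota> v M0 (rat_map K) [(polyser 1, h)]"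
    using rigid_an_trivE[OF rig] by blast
  define y where "y = sum_list (map (\<lambda>(g, L). Abs_fps g * m1.tcoord (\<psi> L) j) K)"
  have "m1.tcoord (betti_map f L) j = fps_of_poly (m0.fq_poly a) * m1.tcoord (\<psi> L) j"
    if "(g, L) \<in> set K" for g L
  proof -
    have "m1.tcoord (betti_map f L) = m1.tcoord (fqact \<iota> a (\<psi> L))"
      using eq tvalid_bettiD_memD[OF K(1) that] unfolding hom_eq_def
      by (intro m1.teq_imp_tcoord_eq) blast
    then show ?thesis by (simp add: m1.tcoord_fqact)
  qed
  then have "fps_of_poly (m1.coord (f h) j)
      = sum_list (map (\<lambda>(g, L). fps_of_poly (m0.fq_poly a) * (Abs_fps g * m1.tcoord (\<psi> L) j)) K)"
    unfolding fps_coord_morphism[OF f K(2)]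
    by (intro arg_cong[where f = sum_list] map_cong) (auto simp: mult_ac)
  also have "\<dots> = fps_of_poly (m0.fq_poly a) * y"
    unfolding y_def by (induction K) (auto simp: distrib_left)
  finally have y_eq: "fps_of_poly (m0.fq_poly a) * y = fps_of_poly (m1.coord (f h) j)" ..
  have "m0.tate_fps y"
    unfolding y_def
  proof (rule m0.tate_fps_sum_list)
    fix z assume "z \<in> set (map (\<lambda>(g, L). Abs_fps g * m1.tcoord (\<psi> L) j) K)"
    then obtain g L where z: "z = Abs_fps g * m1.tcoord (\<psi> L) j" "(g, L) \<in> set K" by auto
    then have "tate v g" "betti \<iota> v M1 (\<psi> L)"
      using tvalid_bettiD_memD[OF K(1)] psi unfolding betti_hom_def by blast+
    then show "m0.tate_fps z"
      using z m1.tate_fps_tcoord[OF betti_imp_tvalid] by (simp add: m0.tate_fps_mult m0.tate_fps_Abs_fps)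
  qed
  then obtain Y where "y = fps_of_poly Y"
    using m0.tate_fps_quotient_is_poly[OF a _ y_eq] by blast
  then have "m1.coord (f h) j = m0.fq_poly a * Y"
    using y_eq by (simp add: fps_of_poly_mult[symmetric] fps_of_poly_eq_iff)
  moreover have "kpoly \<iota> Y"
    using m0.kpoly_quotient[OF a _ m1.kpoly_coord] calculation by metis
  ultimately show ?thesis by blast
qed

text \<open>The quotient commutes with sigma because the coefficients of a lie in F_q and are
  therefore fixed by the q-th root.\<close>
lemma morphism_div_fq_poly:
  assumes f: "kts_morphism \<iota> M0 M1 f" and a: "a \<noteq> 0"
    and dvd: "\<And>h. \<exists>h'. f h = tpoly M1 (m0.fq_poly a) h'"
  obtains f' where "kts_morphism \<iota> M0 M1 f'" "\<And>h. f h = tpoly M1 (m0.fq_poly a) (f' h)"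
proof -
  let ?A = "m0.fq_poly a"
  have kA: "kpoly \<iota> ?A" by (rule m0.kpoly_fq_poly)
  have inj: "x = y" if "tpoly M1 ?A x = tpoly M1 ?A y" for x y
    using m1.tpoly_inject[OF kA _ that] a by (simp add: m0.fq_poly_eq_0_iff)
  obtain f' where f': "\<And>h. f h = tpoly M1 ?A (f' h)" using dvd by metis
  have "kts_morphism \<iota> M0 M1 f'"
    unfolding kts_morphism_def
  proof (intro conjI allI ballI)
    fix h h'
    show "f' (h + h') = f' h + f' h'"
      by (rule inj) (use f in \<open>simp add: kts_morphism_def m1.tpoly_add[OF kA] flip: f'\<close>)
  next
    fix x h assume x: "x \<in> kbar \<iota>"
    show "f' (kscal M0 x h) = kscal M1 x (f' h)"
      by (rule inj) (use f x in \<open>simp add: kts_morphism_def m1.tpoly_S[OF x kA] flip: f'\<close>)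
  next
    fix h
    show "f' (tact M0 h) = tact M1 (f' h)"
      by (rule inj) (use f in \<open>simp add: kts_morphism_def flip: f' m1.tpoly_T[OF kA]\<close>)
  next
    fix h
    show "f' (sact M0 h) = sact M1 (f' h)"
      by (rule inj) (use f in \<open>simp add: kts_morphism_def flip: f' m1.tpoly_fq_poly_Sg\<close>)
  qed
  then show ?thesis using that f' by blast
qed

lemma induced_if_fq_multiple_induced:
  assumes rig: "rigid_an_triv \<iota> v M0" and psi: "betti_hom \<iota> v M0 M1 \<psi>" and a: "a \<noteq> 0"
    and f: "kts_morphism \<iota> M0 M1 f"
    and eq: "hom_eq \<iota> v M0 M1 (betti_map f) (\<lambda>L. fqact \<iota> a (\<psi> L))"
  shows "\<exists>f'. kts_morphism \<iota> M0 M1 f' \<and> hom_eq \<iota> v M0 M1 (betti_map f') \<psi>"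
proof -
  let ?A = "m0.fq_poly a"
  have "\<exists>h'. f h = tpoly M1 ?A h'" for h
    using coord_morphism_dvd[OF rig psi a f eq] m0.kpoly_fq_poly by (intro m1.exists_tpoly_eq_if_coord_dvd)
  then obtain f' where f': "kts_morphism \<iota> M0 M1 f'" "\<And>h. f h = tpoly M1 ?A (f' h)"
    using morphism_div_fq_poly[OF f a] by blast
  have "hom_eq \<iota> v M0 M1 (betti_map f') \<psi>"
    unfolding hom_eq_def
  proof (intro allI impI)
    fix L assume L: "betti \<iota> v M0 L"
    have "fps_of_poly ?A * m1.tcoord (betti_map f' L) j = fps_of_poly ?A * m1.tcoord (\<psi> L) j" for j
    proof -
      have "f = (\<lambda>h. tpoly M1 ?A (f' h))" using f'(2) by (simp add: fun_eq_iff)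
      then have "fps_of_poly ?A * m1.tcoord (betti_map f' L) j = m1.tcoord (betti_map f L) j"
        by (simp add: m1.tcoord_betti_map_tpoly[OF m0.kpoly_fq_poly] flip: betti_map_comp)
      also have "\<dots> = m1.tcoord (fqact \<iota> a (\<psi> L)) j"
        using m1.teq_imp_tcoord_eq[of "betti_map f L" "fqact \<iota> a (\<psi> L)"] eq L
        unfolding hom_eq_def by simp
      finally show ?thesis by (simp add: m1.tcoord_fqact)
    qed
    then have "m1.tcoord (betti_map f' L) = m1.tcoord (\<psi> L)"
      using a by (simp add: fun_eq_iff m0.fq_poly_eq_0_iff)
    moreover have "betti \<iota> v M1 (\<psi> L)" using psi L unfolding betti_hom_def by blast
    ultimately show "teq \<iota> v M1 (betti_map f' L) (\<psi> L)"
      using L tvalid_betti_map[OF betti_imp_tvalid[OF L]] betti_imp_tvalid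
      by (intro m1.tcoord_eq_imp_teq) simp_all
  qed
  then show ?thesis using f'(1) by blast
qed

end

theorem theorem4:
  fixes \<iota> :: "'f::{finite,field} poly \<Rightarrow> 'c::field" and v :: "'c \<Rightarrow> real"
    and M0 :: "('c, 'h0::ab_group_add) ktsmod" and M1 :: "('c, 'h1::ab_group_add) ktsmod"
  assumes "Cinf \<iota> v"
    and "dual_t_motive \<iota> M0" and "dual_t_motive \<iota> M1"
    and "rigid_an_triv \<iota> v M0" and "rigid_an_triv \<iota> v M1"
  shows "(\<forall>f f'. kts_morphism \<iota> M0 M1 f \<longrightarrow> kts_morphism \<iota> M0 M1 f' \<longrightarrow>
            hom_eq \<iota> v M0 M1 (betti_map f) (betti_map f') \<longrightarrow> f = f')
       \<and> (\<forall>\<psi> a. betti_hom \<iota> v M0 M1 \<psi> \<longrightarrow> a \<noteq> 0 \<longrightarrow>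
            (\<exists>f. kts_morphism \<iota> M0 M1 f \<and> hom_eq \<iota> v M0 M1 (betti_map f) (\<lambda>L. fqact \<iota> a (\<psi> L))) \<longrightarrow>
            (\<exists>f. kts_morphism \<iota> M0 M1 f \<and> hom_eq \<iota> v M0 M1 (betti_map f) \<psi>))"
proof -
  interpret kts_hom_setting \<iota> v M0 M1
    using assms(1-3) by unfold_locales (auto simp: dual_t_motive_def)
  show ?thesis
    using morphism_eq_if_betti_eq[OF assms(4)] induced_if_fq_multiple_induced[OF assms(4)] by blast
qed

end
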